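(* Let $\mathcal{C}$ be a non-splitting CSS code on $n$ qubits of distance greater than $2$. Suppose there is some $k$ such that no $1$-local circuit in $\mathcal{C}_n^k\setminus\mathcal{C}_n^{k-1}$ is a logical identity of $\mathcal{C}$. Then for all $m\geq k$, no $1$-local circuit in $\mathcal{C}_n^m\setminus\mathcal{C}_n^{k-1}$ is a logical identity of $\mathcal{C}$.
   Context: The Clifford hierarchy: $\mathcal{C}_n^1=\mathcal{P}_n$ is the $n$-qubit Pauli group and, for $k>1$, $\mathcal{C}_n^k=\{U\in\mathcal{U}(2^n): U\mathcal{P}_nU^\dagger\subseteq\mathcal{C}_n^{k-1}\}$. A $1$-local circuit is a tensor product $C_1\otimes\cdots\otimes C_n$ of single-qubit gates. A CSS code $\mathsf{CSS}(A,B)$ on $n$ qubits is given by subspaces $A,B\subseteq\mathbb{F}_2^n$ with $a\cdot b=0$ for all $a\in A,b\in B$; its codespace is the common $+1$-eigenspace of $X^a$ ($a\in A$) and $Z^b$ ($b\in B$), where $G^a=\bigotimes_{i:a_i=1}G_i$. A logical identity is an operator acting as the identity on the codespace. A subspace $A$ splits on a non-empty $h\subsetneq\{1,\dots,n\}$ if $A=A_1\oplus A_2$ with $A_1$ having support $h$ and $A_2$ supported on the complement of $h$; the code splits on $h$ if both $A$ and $B$ do, and is non-splitting if it splits on no such $h$. *)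

theory Defs
  imports Complex_Main "Jordan_Normal_Form.Matrix"
begin

text \<open>A vector of F_2^n is represented by its support, a subset of {0..<n}
  (qubits are numbered 0..n-1); addition is symmetric difference.\<close>

definition f2_add :: "nat set \<Rightarrow> nat set \<Rightarrow> nat set" where
  "f2_add a b = (a - b) \<union> (b - a)"

definition f2_dot_zero :: "nat set \<Rightarrow> nat set \<Rightarrow> bool" where
  "f2_dot_zero a b \<longleftrightarrow> even (card (a \<inter> b))"

definition f2_subspace :: "nat \<Rightarrow> nat set set \<Rightarrow> bool" where
  "f2_subspace n A \<longleftrightarrow> A \<subseteq> Pow {0..<n} \<and> {} \<in> A \<and> (\<forall>a\<in>A. \<forall>b\<in>A. f2_add a b \<in> A)"

definition f2_perp :: "nat \<Rightarrow> nat set set \<Rightarrow> nat set set" where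
  "f2_perp n A = {x. x \<subseteq> {0..<n} \<and> (\<forall>a\<in>A. f2_dot_zero x a)}"

definition is_CSS :: "nat \<Rightarrow> nat set set \<Rightarrow> nat set set \<Rightarrow> bool" where
  "is_CSS n A B \<longleftrightarrow> f2_subspace n A \<and> f2_subspace n B \<and> (\<forall>a\<in>A. \<forall>b\<in>B. f2_dot_zero a b)"

text \<open>Distance of CSS(A,B) greater than d: every nontrivial logical X-type operator
  (x in B-perp minus A) and every nontrivial logical Z-type operator (z in A-perp minus B)
  has weight greater than d (distance is infinite if there are none).\<close>

definition css_distance_gt :: "nat \<Rightarrow> nat set set \<Rightarrow> nat set set \<Rightarrow> nat \<Rightarrow> bool" where
  "css_distance_gt n A B d \<longleftrightarrow>
     (\<forall>x \<in> f2_perp n B - A. card x > d) \<and> (\<forall>z \<in> f2_perp n A - B. card z > d)"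

definition subspace_splits :: "nat \<Rightarrow> nat set set \<Rightarrow> nat set \<Rightarrow> bool" where
  "subspace_splits n A h \<longleftrightarrow>
     (\<exists>A1 A2. f2_subspace n A1 \<and> f2_subspace n A2 \<and>
        (\<forall>a\<in>A1. a \<subseteq> h) \<and> (\<forall>a\<in>A2. a \<subseteq> {0..<n} - h) \<and>
        A = {f2_add a1 a2 | a1 a2. a1 \<in> A1 \<and> a2 \<in> A2})"

definition css_splits :: "nat \<Rightarrow> nat set set \<Rightarrow> nat set set \<Rightarrow> nat set \<Rightarrow> bool" where
  "css_splits n A B h \<longleftrightarrow> subspace_splits n A h \<and> subspace_splits n B h"

definition css_non_splitting :: "nat \<Rightarrow> nat set set \<Rightarrow> nat set set \<Rightarrow> bool" where
  "css_non_splitting n A B \<longleftrightarrow>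
     (\<forall>h. h \<noteq> {} \<and> h \<subset> {0..<n} \<longrightarrow> \<not> css_splits n A B h)"

text \<open>Computational basis states of n qubits are indexed by 0..<2^n; qubit i of basis
  index x is bit i of x.\<close>

definition qbit :: "nat \<Rightarrow> nat \<Rightarrow> nat" where
  "qbit x i = (x div 2 ^ i) mod 2"

definition tensor :: "nat \<Rightarrow> (nat \<Rightarrow> complex mat) \<Rightarrow> complex mat" where
  "tensor n C = mat (2 ^ n) (2 ^ n) (\<lambda>(x, y). \<Prod>i<n. C i $$ (qbit x i, qbit y i))"

definition adj :: "complex mat \<Rightarrow> complex mat" where
  "adj A = mat (dim_col A) (dim_row A) (\<lambda>(i, j). cnj (A $$ (j, i)))"

definition unitary_mat :: "nat \<Rightarrow> complex mat \<Rightarrow> bool" where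
  "unitary_mat N U \<longleftrightarrow> U \<in> carrier_mat N N \<and> U * adj U = 1\<^sub>m N \<and> adj U * U = 1\<^sub>m N"

definition pauli_X :: "complex mat" where
  "pauli_X = mat 2 2 (\<lambda>(i, j). if i \<noteq> j then 1 else 0)"

definition pauli_Z :: "complex mat" where
  "pauli_Z = mat 2 2 (\<lambda>(i, j). if i = j then (if i = 0 then 1 else -1) else 0)"

definition Xpow :: "nat \<Rightarrow> nat set \<Rightarrow> complex mat" where
  "Xpow n a = tensor n (\<lambda>i. if i \<in> a then pauli_X else 1\<^sub>m 2)"

definition Zpow :: "nat \<Rightarrow> nat set \<Rightarrow> complex mat" where
  "Zpow n b = tensor n (\<lambda>i. if i \<in> b then pauli_Z else 1\<^sub>m 2)"

definition pauli_group :: "nat \<Rightarrow> complex mat set" where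
  "pauli_group n = {(\<i> ^ c) \<cdot>\<^sub>m (Xpow n a * Zpow n b) | c a b.
                      a \<subseteq> {0..<n} \<and> b \<subseteq> {0..<n}}"

text \<open>Level 1 is the Pauli group; level k+1 consists of unitaries U
  with U P U^dagger in level k for all Paulis P. Level 0 is never used by the
  statement (it is an arbitrary placeholder, the empty set).\<close>

fun clifford_hierarchy :: "nat \<Rightarrow> nat \<Rightarrow> complex mat set" where
  "clifford_hierarchy n 0 = {}"
| "clifford_hierarchy n (Suc 0) = pauli_group n"
| "clifford_hierarchy n (Suc (Suc k)) =
     {U. unitary_mat (2 ^ n) U \<and>
         (\<forall>P \<in> pauli_group n. U * P * adj U \<in> clifford_hierarchy n (Suc k))}"

definition one_local :: "nat \<Rightarrow> complex mat \<Rightarrow> bool" where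
  "one_local n U \<longleftrightarrow> (\<exists>C. (\<forall>i<n. unitary_mat 2 (C i)) \<and> U = tensor n C)"

definition codespace :: "nat \<Rightarrow> nat set set \<Rightarrow> nat set set \<Rightarrow> complex vec set" where
  "codespace n A B = {\<psi> \<in> carrier_vec (2 ^ n).
      (\<forall>a\<in>A. Xpow n a *\<^sub>v \<psi> = \<psi>) \<and> (\<forall>b\<in>B. Zpow n b *\<^sub>v \<psi> = \<psi>)}"

definition logical_identity :: "nat \<Rightarrow> nat set set \<Rightarrow> nat set set \<Rightarrow> complex mat \<Rightarrow> bool" where
  "logical_identity n A B U \<longleftrightarrow> (\<forall>\<psi> \<in> codespace n A B. U *\<^sub>v \<psi> = \<psi>)"

end

theory Submission
  imports Defs
begin

(*
  Let U = C_0 (x) ... (x) C_(n-1) be a 1-local logical identity at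
  level m + 1 but not m, where m >= k >= 2. Then some factor C_t is outside level m of the
  single-qubit hierarchy, witnessed by a Pauli P with C_t P C_t^dagger outside level m - 1.
  For n >= 2, non-splitting and distance > 2 put every qubit into the support of an X- and of a
  Z-stabilizer, so some stabilizer S has P as its t-th factor; the group commutator
  U S U^dagger S^dagger is then a 1-local logical identity at level m but not m - 1.
  For n = 1 the code space is spanned by |+> or by |0>, and (U^dagger)^2 plays the same role.
  Iterating moves any counterexample down to level k.
*)

section \<open>Basis indices and tensor products\<close>

lemma qbit_less_2 [simp]: "qbit x i < 2"
  by (simp add: qbit_def)

lemma qbit_eq_0_if_less_pow2: "(y::nat) < 2 ^ n \<Longrightarrow> qbit y n = 0"
  by (simp add: qbit_def)

lemma qbit_add_pow2_top: "(y::nat) < 2 ^ n \<Longrightarrow> qbit (y + 2 ^ n) n = 1"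
  by (simp add: qbit_def)

lemma qbit_add_pow2_below:
  assumes "t < n"
  shows "qbit (y + 2 ^ n) t = qbit y t"
proof -
  have "(2::nat) ^ n = 2 ^ t * 2 ^ (n - t)"
    using assms by (simp flip: power_add)
  then have "(y + 2 ^ n) div 2 ^ t = y div 2 ^ t + 2 ^ (n - t)"
    by simp
  moreover obtain k where "n - t = Suc k"
    using assms by (metis Suc_diff_Suc)
  ultimately show ?thesis
    unfolding qbit_def by simp
qed

lemma sum_lessThan_pow2_Suc:
  fixes g :: "nat \<Rightarrow> 'a::comm_monoid_add"
  shows "(\<Sum>y<2 ^ Suc n. g y) = (\<Sum>y<2 ^ n. g y) + (\<Sum>y<2 ^ n. g (y + 2 ^ n))"
proof -
  have "{..<(2::nat) ^ Suc n} = {..<2 ^ n} \<union> {2 ^ n..<2 ^ n + 2 ^ n}"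
    by auto
  then have "(\<Sum>y<2 ^ Suc n. g y) = sum g ({..<2 ^ n} \<union> {2 ^ n..<2 ^ n + 2 ^ n})"
    by (simp only:)
  also have "\<dots> = (\<Sum>y<2 ^ n. g y) + (\<Sum>y\<in>{2 ^ n..<2 ^ n + 2 ^ n}. g y)"
    by (rule sum.union_disjoint) auto
  also have "(\<Sum>y\<in>{2 ^ n..<2 ^ n + 2 ^ n}. g y) = (\<Sum>y<2 ^ n. g (y + 2 ^ n))"
    using sum.shift_bounds_nat_ivl[of g 0 "2 ^ n" "2 ^ n"] by (simp add: lessThan_atLeast0)
  finally show ?thesis .
qed

lemma sum_prod_qbit:
  fixes f :: "nat \<Rightarrow> nat \<Rightarrow> 'a::comm_semiring_1"
  shows "(\<Sum>y<2 ^ n. \<Prod>t<n. f t (qbit y t)) = (\<Prod>t<n. f t 0 + f t 1)"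
proof (induction n)
  case 0
  then show ?case by simp
next
  case (Suc n)
  have low: "(\<Prod>t<Suc n. f t (qbit y t)) = (\<Prod>t<n. f t (qbit y t)) * f n 0"
    if "y < 2 ^ n" for y
    using that by (simp add: qbit_eq_0_if_less_pow2)
  have high: "(\<Prod>t<Suc n. f t (qbit (y + 2 ^ n) t)) = (\<Prod>t<n. f t (qbit y t)) * f n 1"
    if "y < 2 ^ n" for y
    using that by (simp add: qbit_add_pow2_top qbit_add_pow2_below)
  have "(\<Sum>y<2 ^ Suc n. \<Prod>t<Suc n. f t (qbit y t))
      = (\<Sum>y<2 ^ n. (\<Prod>t<n. f t (qbit y t)) * f n 0) + (\<Sum>y<2 ^ n. (\<Prod>t<n. f t (qbit y t)) * f n 1)"
    unfolding sum_lessThan_pow2_Suc using low high by simp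
  also have "\<dots> = (\<Prod>t<n. f t 0 + f t 1) * (f n 0 + f n 1)"
    by (simp add: Suc distrib_left flip: sum_distrib_right)
  finally show ?case
    by simp
qed

lemma eq_if_qbits_eq:
  assumes "(x::nat) < 2 ^ n" "y < 2 ^ n" "\<forall>t<n. qbit x t = qbit y t"
  shows "x = y"
proof (rule bit_eqI)
  fix t
  show "bit x t = bit y t"
  proof (cases "t < n")
    case True
    then show ?thesis
      using assms(3) by (auto simp: qbit_def bit_iff_odd odd_iff_mod_2_eq_one)
  next
    case False
    then show ?thesis
      using assms(1,2) by (metis bit_take_bit_iff not_less take_bit_nat_eq_self_iff)
  qed
qed

lemma ex_index_with_qbits:
  assumes "\<forall>t<n. p t < (2::nat)"
  shows "\<exists>x<2 ^ n. \<forall>t<n. qbit x t = p t"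
  using assms
proof (induction n)
  case 0
  then show ?case by auto
next
  case (Suc n)
  then obtain x where x: "x < 2 ^ n" "\<forall>t<n. qbit x t = p t"
    by auto
  show ?case
  proof (cases "p n = 0")
    case True
    then show ?thesis
      using x by (intro exI[of _ x]) (auto simp: less_Suc_eq qbit_eq_0_if_less_pow2)
  next
    case False
    then have "p n = 1"
      using Suc.prems by fastforce
    then show ?thesis
      using x by (intro exI[of _ "x + 2 ^ n"]) (auto simp: less_Suc_eq qbit_add_pow2_top qbit_add_pow2_below)
  qed
qed

lemma index_mult_mat_2:
  assumes "A \<in> carrier_mat 2 2" "B \<in> carrier_mat 2 2" "p < 2" "q < 2"
  shows "(A * B) $$ (p, q) = A $$ (p, 0) * B $$ (0, q) + A $$ (p, 1) * B $$ (1, q)"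
  using assms by (simp add: scalar_prod_def numeral_2_eq_2)

lemma smult_smult_mat: "a \<cdot>\<^sub>m (b \<cdot>\<^sub>m (A :: complex mat)) = (a * b) \<cdot>\<^sub>m A"
  by (rule eq_matI) auto

lemma one_smult_mat [simp]: "(1::complex) \<cdot>\<^sub>m A = A"
  by (rule eq_matI) auto

lemma tensor_carrier_mat [simp]: "tensor n C \<in> carrier_mat (2 ^ n) (2 ^ n)"
  by (simp add: tensor_def)

lemma tensor_dim [simp]: "dim_row (tensor n C) = 2 ^ n" "dim_col (tensor n C) = 2 ^ n"
  by (simp_all add: tensor_def)

lemma tensor_index:
  "x < 2 ^ n \<Longrightarrow> y < 2 ^ n \<Longrightarrow> tensor n C $$ (x, y) = (\<Prod>i<n. C i $$ (qbit x i, qbit y i))"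
  by (simp add: tensor_def)

lemma tensor_cong: "(\<And>t. t < n \<Longrightarrow> C t = D t) \<Longrightarrow> tensor n C = tensor n D"
  by (rule eq_matI) (auto simp: tensor_index intro!: prod.cong)

lemma tensor_mult:
  assumes "\<And>t. t < n \<Longrightarrow> A t \<in> carrier_mat 2 2" "\<And>t. t < n \<Longrightarrow> B t \<in> carrier_mat 2 2"
  shows "tensor n A * tensor n B = tensor n (\<lambda>t. A t * B t)"
proof (rule eq_matI)
  fix x z
  assume "x < dim_row (tensor n (\<lambda>t. A t * B t))" "z < dim_col (tensor n (\<lambda>t. A t * B t))"
  then have xz: "x < 2 ^ n" "z < 2 ^ n"
    by simp_all
  have "(tensor n A * tensor n B) $$ (x, z) = (\<Sum>y<2 ^ n. tensor n A $$ (x, y) * tensor n B $$ (y, z))"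
    using xz by (simp add: scalar_prod_def lessThan_atLeast0)
  also have "\<dots> = (\<Sum>y<2 ^ n. \<Prod>t<n. A t $$ (qbit x t, qbit y t) * B t $$ (qbit y t, qbit z t))"
    using xz by (simp add: tensor_index prod.distrib)
  also have "\<dots> = (\<Prod>t<n. A t $$ (qbit x t, 0) * B t $$ (0, qbit z t) + A t $$ (qbit x t, 1) * B t $$ (1, qbit z t))"
    by (rule sum_prod_qbit[of "\<lambda>t s. A t $$ (qbit x t, s) * B t $$ (s, qbit z t)"])
  also have "\<dots> = tensor n (\<lambda>t. A t * B t) $$ (x, z)"
    using xz assms by (auto simp: tensor_index index_mult_mat_2 intro!: prod.cong)
  finally show "(tensor n A * tensor n B) $$ (x, z) = tensor n (\<lambda>t. A t * B t) $$ (x, z)" .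
qed auto

lemma tensor_one_mat:
  assumes "\<And>t. t < n \<Longrightarrow> C t = 1\<^sub>m 2"
  shows "tensor n C = 1\<^sub>m (2 ^ n)"
proof (rule eq_matI)
  fix x y
  assume "x < dim_row (1\<^sub>m (2 ^ n) :: complex mat)" "y < dim_col (1\<^sub>m (2 ^ n) :: complex mat)"
  then have xy: "x < 2 ^ n" "y < 2 ^ n"
    by simp_all
  show "tensor n C $$ (x, y) = 1\<^sub>m (2 ^ n) $$ (x, y)"
  proof (cases "x = y")
    case True
    then show ?thesis
      using xy assms by (simp add: tensor_index)
  next
    case False
    then obtain t where "t < n" "qbit x t \<noteq> qbit y t"
      using eq_if_qbits_eq[OF xy] by auto
    then have "(\<Prod>i<n. C i $$ (qbit x i, qbit y i)) = 0"
      using assms by (auto simp: prod_zero_iff intro!: bexI[of _ t])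
    then show ?thesis
      using xy False by (simp add: tensor_index)
  qed
qed auto

lemma tensor_smult:
  assumes "\<And>t. t < n \<Longrightarrow> C t \<in> carrier_mat 2 2"
  shows "tensor n (\<lambda>t. z t \<cdot>\<^sub>m C t) = (\<Prod>t<n. z t) \<cdot>\<^sub>m tensor n C"
  using assms[THEN carrier_matD(1)] assms[THEN carrier_matD(2)]
  by (intro eq_matI) (auto simp: tensor_index simp flip: prod.distrib intro!: prod.cong)

lemma tensor_1:
  assumes "C 0 \<in> carrier_mat 2 2"
  shows "tensor 1 C = C 0"
  by (rule eq_matI) (use assms in \<open>auto simp: tensor_index qbit_def\<close>)

text \<open>Evaluate both sides at basis indices that select a fixed non-zero entry of every factor
  of the first product away from qubit \<open>t\<close>.\<close>

lemma tensor_factor_proportional: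
  assumes cC: "\<And>s. s < n \<Longrightarrow> C s \<in> carrier_mat 2 2" and cD: "\<And>s. s < n \<Longrightarrow> D s \<in> carrier_mat 2 2"
    and nz: "\<And>s. s < n \<Longrightarrow> \<exists>p q. p < 2 \<and> q < 2 \<and> C s $$ (p, q) \<noteq> 0"
    and eq: "tensor n C = w \<cdot>\<^sub>m tensor n D" and t: "t < n"
  shows "\<exists>l. C t = l \<cdot>\<^sub>m D t"
proof -
  obtain P Q where PQ: "\<And>s. s < n \<Longrightarrow> P s < 2 \<and> Q s < 2 \<and> C s $$ (P s, Q s) \<noteq> 0"
    using nz by metis
  define KC where "KC = (\<Prod>s\<in>{..<n} - {t}. C s $$ (P s, Q s))"
  define KD where "KD = (\<Prod>s\<in>{..<n} - {t}. D s $$ (P s, Q s))"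
  have "KC \<noteq> 0"
    unfolding KC_def using PQ by (auto simp: prod_zero_iff)
  have entry: "C t $$ (p, q) = (w * KD / KC) * D t $$ (p, q)" if "p < 2" "q < 2" for p q
  proof -
    have "\<forall>s<n. (P(t := p)) s < 2" "\<forall>s<n. (Q(t := q)) s < 2"
      using PQ that by auto
    then obtain x y where x: "x < 2 ^ n" "\<forall>s<n. qbit x s = (P(t := p)) s"
      and y: "y < 2 ^ n" "\<forall>s<n. qbit y s = (Q(t := q)) s"
      using ex_index_with_qbits[of n "P(t := p)"] ex_index_with_qbits[of n "Q(t := q)"] by auto
    have row_col: "tensor n E $$ (x, y) = E t $$ (p, q) * (\<Prod>s\<in>{..<n} - {t}. E s $$ (P s, Q s))" for E
    proof -
      have "tensor n E $$ (x, y) = (\<Prod>s<n. E s $$ ((P(t := p)) s, (Q(t := q)) s))"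
        using x y by (simp add: tensor_index)
      also have "\<dots> = E t $$ (p, q) * (\<Prod>s\<in>{..<n} - {t}. E s $$ ((P(t := p)) s, (Q(t := q)) s))"
        using t by (subst prod.remove[of _ t]) auto
      also have "(\<Prod>s\<in>{..<n} - {t}. E s $$ ((P(t := p)) s, (Q(t := q)) s)) = (\<Prod>s\<in>{..<n} - {t}. E s $$ (P s, Q s))"
        by (rule prod.cong) auto
      finally show ?thesis .
    qed
    have "tensor n C $$ (x, y) = w * tensor n D $$ (x, y)"
      using eq x y by simp
    then have "C t $$ (p, q) * KC = w * (D t $$ (p, q) * KD)"
      unfolding row_col KC_def KD_def .
    then show ?thesis
      using \<open>KC \<noteq> 0\<close> by (simp add: field_simps)
  qed
  have "C t \<in> carrier_mat 2 2" "D t \<in> carrier_mat 2 2"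
    using cC cD t by auto
  then show ?thesis
    by (intro exI[of _ "w * KD / KC"] eq_matI) (auto simp: entry)
qed

section \<open>Adjoints and unitary matrices\<close>

lemma adj_carrier_mat [simp]: "A \<in> carrier_mat r c \<Longrightarrow> adj A \<in> carrier_mat c r"
  by (simp add: adj_def)

lemma adj_dim [simp]: "dim_row (adj A) = dim_col A" "dim_col (adj A) = dim_row A"
  by (simp_all add: adj_def)

lemma adj_index [simp]: "i < dim_col A \<Longrightarrow> j < dim_row A \<Longrightarrow> adj A $$ (i, j) = cnj (A $$ (j, i))"
  by (simp add: adj_def)

lemma adj_index_carrier:
  "A \<in> carrier_mat r c \<Longrightarrow> i < c \<Longrightarrow> j < r \<Longrightarrow> adj A $$ (i, j) = cnj (A $$ (j, i))"
  by (simp add: adj_def)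

lemma adj_mult:
  assumes "A \<in> carrier_mat r k" "B \<in> carrier_mat k c"
  shows "adj (A * B) = adj B * adj A"
  by (rule eq_matI) (use assms in \<open>auto simp: scalar_prod_def cnj_sum intro!: sum.cong\<close>)

lemma adj_smult: "adj (z \<cdot>\<^sub>m A) = cnj z \<cdot>\<^sub>m adj A"
  by (rule eq_matI) auto

lemma adj_adj [simp]: "adj (adj A) = A"
  by (rule eq_matI) auto

lemma adj_one_mat [simp]: "adj (1\<^sub>m N) = 1\<^sub>m N"
  by (rule eq_matI) auto

lemma tensor_adj:
  assumes "\<And>t. t < n \<Longrightarrow> C t \<in> carrier_mat 2 2"
  shows "adj (tensor n C) = tensor n (\<lambda>t. adj (C t))"
  using assms[THEN carrier_matD(1)] assms[THEN carrier_matD(2)]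
  by (intro eq_matI) (auto simp: tensor_index cnj_prod intro!: prod.cong)

lemma unit_cnj_mult: "cmod z = 1 \<Longrightarrow> cnj z * z = 1"
  by (metis complex_norm_square mult.commute of_real_1 power_one)

lemma unit_mult_cnj: "cmod z = 1 \<Longrightarrow> z * cnj z = 1"
  using unit_cnj_mult by (simp add: mult.commute)

lemma unit_if_mult_cnj:
  assumes "z * cnj z = 1"
  shows "cmod z = 1"
proof -
  have "(cmod z) ^ 2 = 1"
    using assms by (metis complex_norm_square of_real_eq_1_iff)
  then show ?thesis
    using norm_ge_zero[of z] by (auto simp: power2_eq_1_iff)
qed

lemma unitary_mat_carrier: "unitary_mat N U \<Longrightarrow> U \<in> carrier_mat N N"
  by (simp add: unitary_mat_def)

lemma unitary_mat_adj: "unitary_mat N U \<Longrightarrow> unitary_mat N (adj U)"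
  by (auto simp: unitary_mat_def)

lemma unitary_mat_mult:
  assumes "unitary_mat N U" "unitary_mat N V"
  shows "unitary_mat N (U * V)"
proof -
  have U: "U \<in> carrier_mat N N" "adj U \<in> carrier_mat N N"
    and V: "V \<in> carrier_mat N N" "adj V \<in> carrier_mat N N"
    using assms by (auto simp: unitary_mat_def)
  have "U * V * adj (U * V) = U * (V * adj V) * adj U"
    using U V by (simp add: adj_mult assoc_mult_mat[of _ N N _ N _ N] mult_carrier_mat[of _ N N _ N])
  moreover have "adj (U * V) * (U * V) = adj V * (adj U * U) * V"
    using U V by (simp add: adj_mult assoc_mult_mat[of _ N N _ N _ N] mult_carrier_mat[of _ N N _ N])
  ultimately show ?thesis
    using assms U V by (simp add: unitary_mat_def)
qed

lemma unitary_mat_smult: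
  assumes "unitary_mat N U" "cmod z = 1"
  shows "unitary_mat N (z \<cdot>\<^sub>m U)"
  using assms unit_cnj_mult[OF assms(2)] unit_mult_cnj[OF assms(2)]
  by (auto simp: unitary_mat_def adj_smult mult_smult_distrib[of _ N N _ N]
      mult_smult_assoc_mat[of _ N N _ N] smult_smult_mat)

lemma unitary_mat_cancel_left:
  assumes "unitary_mat N W" "X \<in> carrier_mat N N"
  shows "adj W * (W * X) = X"
proof -
  have W: "W \<in> carrier_mat N N" "adj W \<in> carrier_mat N N"
    using assms by (auto simp: unitary_mat_def)
  have "adj W * (W * X) = (adj W * W) * X"
    using assoc_mult_mat[OF W(2) W(1) assms(2)] by (rule sym)
  also have "\<dots> = X"
    using assms by (simp add: unitary_mat_def)
  finally show ?thesis .
qed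

lemma conj_mult:
  assumes U: "unitary_mat N W" and A: "A \<in> carrier_mat N N" and B: "B \<in> carrier_mat N N"
  shows "W * (A * B) * adj W = (W * A * adj W) * (W * B * adj W)"
proof -
  have W: "W \<in> carrier_mat N N" "adj W \<in> carrier_mat N N"
    using U by (auto simp: unitary_mat_def)
  have "(W * A * adj W) * (W * B * adj W) = W * (A * (adj W * (W * (B * adj W))))"
    using A B W by (simp add: assoc_mult_mat[of _ N N _ N _ N] mult_carrier_mat[of _ N N _ N])
  also have "adj W * (W * (B * adj W)) = B * adj W"
    using B W by (intro unitary_mat_cancel_left[OF U]) simp
  finally show ?thesis
    using A B W by (simp add: assoc_mult_mat[of _ N N _ N _ N] mult_carrier_mat[of _ N N _ N])
qed

lemma conj_smult:
  assumes "W \<in> carrier_mat N N" "P \<in> carrier_mat N N"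
  shows "W * (c \<cdot>\<^sub>m P) * adj W = c \<cdot>\<^sub>m (W * P * adj W)"
  using assms by (simp add: mult_smult_distrib[of _ N N _ N] mult_smult_assoc_mat[of _ N N _ N])

lemma tensor_unitary_mat:
  assumes "\<And>t. t < n \<Longrightarrow> unitary_mat 2 (C t)"
  shows "unitary_mat (2 ^ n) (tensor n C)"
proof -
  have c: "\<And>t. t < n \<Longrightarrow> C t \<in> carrier_mat 2 2" "\<And>t. t < n \<Longrightarrow> adj (C t) \<in> carrier_mat 2 2"
    using assms by (auto simp: unitary_mat_def)
  have "tensor n C * adj (tensor n C) = tensor n (\<lambda>t. C t * adj (C t))"
    "adj (tensor n C) * tensor n C = tensor n (\<lambda>t. adj (C t) * C t)"
    using c by (simp_all add: tensor_adj tensor_mult)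
  moreover have "tensor n (\<lambda>t. C t * adj (C t)) = 1\<^sub>m (2 ^ n)" "tensor n (\<lambda>t. adj (C t) * C t) = 1\<^sub>m (2 ^ n)"
    using assms by (auto simp: unitary_mat_def intro!: tensor_one_mat)
  ultimately show ?thesis
    by (simp add: unitary_mat_def)
qed

lemma tensor_conj:
  assumes "\<And>t. t < n \<Longrightarrow> C t \<in> carrier_mat 2 2" "\<And>t. t < n \<Longrightarrow> D t \<in> carrier_mat 2 2"
  shows "tensor n C * tensor n D * adj (tensor n C) = tensor n (\<lambda>t. C t * D t * adj (C t))"
proof -
  have "tensor n C * tensor n D * adj (tensor n C) = tensor n (\<lambda>t. C t * D t) * tensor n (\<lambda>t. adj (C t))"
    using assms by (simp add: tensor_mult tensor_adj)
  also have "\<dots> = tensor n (\<lambda>t. C t * D t * adj (C t))"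
    using assms by (intro tensor_mult) (auto intro: mult_carrier_mat)
  finally show ?thesis .
qed

lemma tensor_group_commutator:
  assumes "\<And>t. t < n \<Longrightarrow> C t \<in> carrier_mat 2 2" "\<And>t. t < n \<Longrightarrow> D t \<in> carrier_mat 2 2"
  shows "tensor n C * tensor n D * adj (tensor n C) * adj (tensor n D)
    = tensor n (\<lambda>t. C t * D t * adj (C t) * adj (D t))"
proof -
  have "tensor n C * tensor n D * adj (tensor n C) = tensor n (\<lambda>t. C t * D t * adj (C t))"
    using assms by (rule tensor_conj)
  moreover have "adj (tensor n D) = tensor n (\<lambda>t. adj (D t))"
    using assms(2) by (rule tensor_adj)
  ultimately have "tensor n C * tensor n D * adj (tensor n C) * adj (tensor n D)
      = tensor n (\<lambda>t. C t * D t * adj (C t)) * tensor n (\<lambda>t. adj (D t))"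
    by simp
  also have "\<dots> = tensor n (\<lambda>t. C t * D t * adj (C t) * adj (D t))"
    using assms by (intro tensor_mult) (auto intro!: mult_carrier_mat[of _ 2 2 _ 2])
  finally show ?thesis .
qed


section \<open>The Pauli group\<close>

definition pauli_xz :: "bool \<Rightarrow> bool \<Rightarrow> complex mat" where
  "pauli_xz \<alpha> \<beta> = (if \<alpha> then pauli_X else 1\<^sub>m 2) * (if \<beta> then pauli_Z else 1\<^sub>m 2)"

definition pauli_string :: "nat set \<Rightarrow> nat set \<Rightarrow> nat \<Rightarrow> complex mat" where
  "pauli_string a b t = pauli_xz (t \<in> a) (t \<in> b)"

lemma pauli_X_carrier [simp]: "pauli_X \<in> carrier_mat 2 2"
  by (simp add: pauli_X_def)

lemma pauli_Z_carrier [simp]: "pauli_Z \<in> carrier_mat 2 2"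
  by (simp add: pauli_Z_def)

lemma pauli_xz_carrier [simp]: "pauli_xz \<alpha> \<beta> \<in> carrier_mat 2 2"
  unfolding pauli_xz_def by (rule mult_carrier_mat) auto

lemma pauli_string_carrier [simp]: "pauli_string a b t \<in> carrier_mat 2 2"
  by (simp add: pauli_string_def)

lemma pauli_xz_False_False [simp]: "pauli_xz False False = 1\<^sub>m 2"
  by (simp add: pauli_xz_def)

lemma pauli_xz_True_False: "pauli_xz True False = pauli_X"
  by (simp add: pauli_xz_def right_mult_one_mat[OF pauli_X_carrier])

lemma pauli_xz_False_True: "pauli_xz False True = pauli_Z"
  by (simp add: pauli_xz_def left_mult_one_mat[OF pauli_Z_carrier])

lemma pauli_xz_eq_mat:
  "pauli_xz \<alpha> \<beta> = mat 2 2 (\<lambda>(p, q). if q = (if \<alpha> then 1 - p else p) then (if \<beta> \<and> q = 1 then -1 else 1) else 0)"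
  unfolding pauli_xz_def pauli_X_def pauli_Z_def
  by (cases \<alpha>; cases \<beta>; rule eq_matI) (auto simp: scalar_prod_def numeral_2_eq_2 less_Suc_eq)

lemma pauli_xz_mult:
  "pauli_xz \<alpha> \<beta> * pauli_xz \<gamma> \<delta> = (if \<beta> \<and> \<gamma> then -1 else 1) \<cdot>\<^sub>m pauli_xz (\<alpha> \<noteq> \<gamma>) (\<beta> \<noteq> \<delta>)"
  unfolding pauli_xz_eq_mat
  by (cases \<alpha>; cases \<beta>; cases \<gamma>; cases \<delta>; rule eq_matI; auto simp: scalar_prod_def numeral_2_eq_2 less_Suc_eq)

lemma pauli_xz_adj: "adj (pauli_xz \<alpha> \<beta>) = (if \<alpha> \<and> \<beta> then -1 else 1) \<cdot>\<^sub>m pauli_xz \<alpha> \<beta>"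
  unfolding pauli_xz_eq_mat by (rule eq_matI) (auto simp: less_2_cases_iff)

lemma pauli_xz_unitary: "unitary_mat 2 (pauli_xz \<alpha> \<beta>)"
  by (auto simp: unitary_mat_def pauli_xz_adj pauli_xz_mult smult_smult_mat
      mult_smult_distrib[of _ 2 2 _ 2] mult_smult_assoc_mat[of _ 2 2 _ 2])

(* Keeps the qubit count 1 in statements such as pauli_group 1 from being rewritten to Suc 0. *)
declare One_nat_def [simp del]

lemma Xpow_mult_Zpow: "Xpow n a * Zpow n b = tensor n (pauli_string a b)"
  unfolding Xpow_def Zpow_def
  by (subst tensor_mult) (auto intro!: tensor_cong simp: pauli_string_def pauli_xz_def)

lemma pauli_group_iff: "P \<in> pauli_group n \<longleftrightarrow> (\<exists>c a b. P = \<i> ^ c \<cdot>\<^sub>m tensor n (pauli_string a b))"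
proof
  assume "\<exists>c a b. P = \<i> ^ c \<cdot>\<^sub>m tensor n (pauli_string a b)"
  then obtain c a b where P: "P = \<i> ^ c \<cdot>\<^sub>m tensor n (pauli_string a b)"
    by blast
  have "tensor n (pauli_string a b) = tensor n (pauli_string (a \<inter> {0..<n}) (b \<inter> {0..<n}))"
    by (rule tensor_cong) (auto simp: pauli_string_def)
  then show "P \<in> pauli_group n"
    unfolding pauli_group_def P
    by (intro CollectI exI[of _ c] exI[of _ "a \<inter> {0..<n}"] exI[of _ "b \<inter> {0..<n}"])
      (auto simp: Xpow_mult_Zpow)
qed (auto simp: pauli_group_def Xpow_mult_Zpow)

lemma pauli_group_1_iff: "P \<in> pauli_group 1 \<longleftrightarrow> (\<exists>c \<alpha> \<beta>. P = \<i> ^ c \<cdot>\<^sub>m pauli_xz \<alpha> \<beta>)"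
proof -
  have "tensor 1 (pauli_string a b) = pauli_xz (0 \<in> a) (0 \<in> b)" for a b
    by (subst tensor_1) (simp_all add: pauli_string_def)
  moreover have "pauli_xz \<alpha> \<beta> = tensor 1 (pauli_string {t. \<alpha>} {t. \<beta>})" for \<alpha> \<beta>
    by (subst tensor_1) (simp_all add: pauli_string_def)
  ultimately show ?thesis
    unfolding pauli_group_iff by metis
qed

lemma pauli_xz_in_pauli_group: "pauli_xz \<alpha> \<beta> \<in> pauli_group 1"
  unfolding pauli_group_1_iff by (metis one_smult_mat power_0)

lemma pauli_group_carrier: "P \<in> pauli_group n \<Longrightarrow> P \<in> carrier_mat (2 ^ n) (2 ^ n)"
  unfolding pauli_group_iff by auto

lemma pauli_group_smult_ipow: "P \<in> pauli_group n \<Longrightarrow> \<i> ^ c \<cdot>\<^sub>m P \<in> pauli_group n"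
  unfolding pauli_group_iff by (metis smult_smult_mat power_add)

lemma pauli_group_sign_smult: "P \<in> pauli_group n \<Longrightarrow> (if b then -1 else 1) \<cdot>\<^sub>m P \<in> pauli_group n"
  using pauli_group_smult_ipow[of P n 2] by auto

lemma tensor_in_pauli_group:
  assumes "\<And>t. t < n \<Longrightarrow> C t \<in> pauli_group 1"
  shows "tensor n C \<in> pauli_group n"
proof -
  obtain c \<alpha> \<beta> where C: "\<And>t. t < n \<Longrightarrow> C t = \<i> ^ c t \<cdot>\<^sub>m pauli_xz (\<alpha> t) (\<beta> t)"
    using assms unfolding pauli_group_1_iff by metis
  have "tensor n C = tensor n (\<lambda>t. \<i> ^ c t \<cdot>\<^sub>m pauli_string {t. \<alpha> t} {t. \<beta> t} t)"
    by (rule tensor_cong) (simp add: C pauli_string_def)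
  also have "\<dots> = \<i> ^ (\<Sum>t<n. c t) \<cdot>\<^sub>m tensor n (pauli_string {t. \<alpha> t} {t. \<beta> t})"
    by (simp add: tensor_smult power_sum)
  finally show ?thesis
    unfolding pauli_group_iff by blast
qed

lemma pauli_group_mult:
  assumes "P \<in> pauli_group n" "Q \<in> pauli_group n"
  shows "P * Q \<in> pauli_group n"
proof -
  obtain c a b d a' b' where P: "P = \<i> ^ c \<cdot>\<^sub>m tensor n (pauli_string a b)"
    and Q: "Q = \<i> ^ d \<cdot>\<^sub>m tensor n (pauli_string a' b')"
    using assms unfolding pauli_group_iff by blast
  have "P * Q = \<i> ^ d \<cdot>\<^sub>m (\<i> ^ c \<cdot>\<^sub>m tensor n (\<lambda>t. pauli_string a b t * pauli_string a' b' t))"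
    unfolding P Q by (simp add: tensor_mult mult_smult_distrib[of _ "2 ^ n" "2 ^ n" _ "2 ^ n"]
        mult_smult_assoc_mat[of _ "2 ^ n" "2 ^ n" _ "2 ^ n"])
  moreover have "tensor n (\<lambda>t. pauli_string a b t * pauli_string a' b' t) \<in> pauli_group n"
    by (intro tensor_in_pauli_group)
      (simp add: pauli_string_def pauli_xz_mult pauli_group_sign_smult pauli_xz_in_pauli_group)
  ultimately show ?thesis
    by (simp add: pauli_group_smult_ipow)
qed

lemma pauli_group_adj:
  assumes "P \<in> pauli_group n"
  shows "adj P \<in> pauli_group n"
proof -
  obtain c a b where P: "P = \<i> ^ c \<cdot>\<^sub>m tensor n (pauli_string a b)"
    using assms unfolding pauli_group_iff by blast
  have "cnj (\<i> ^ c) = \<i> ^ (3 * c)"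
    by (simp add: power_mult power3_eq_cube)
  then have "adj P = \<i> ^ (3 * c) \<cdot>\<^sub>m tensor n (\<lambda>t. adj (pauli_string a b t))"
    unfolding P adj_smult by (simp add: tensor_adj)
  moreover have "tensor n (\<lambda>t. adj (pauli_string a b t)) \<in> pauli_group n"
    by (intro tensor_in_pauli_group)
      (simp add: pauli_string_def pauli_xz_adj pauli_group_sign_smult pauli_xz_in_pauli_group)
  ultimately show ?thesis
    by (simp add: pauli_group_smult_ipow)
qed

lemma pauli_group_unitary:
  assumes "P \<in> pauli_group n"
  shows "unitary_mat (2 ^ n) P"
proof -
  obtain c a b where P: "P = \<i> ^ c \<cdot>\<^sub>m tensor n (pauli_string a b)"
    using assms unfolding pauli_group_iff by blast
  show ?thesis
    unfolding P by (intro unitary_mat_smult tensor_unitary_mat)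
      (simp_all add: pauli_string_def pauli_xz_unitary norm_power)
qed

lemma pauli_group_square:
  assumes "P \<in> pauli_group n"
  shows "\<exists>e. P * P = (-1::complex) ^ e \<cdot>\<^sub>m 1\<^sub>m (2 ^ n)"
proof -
  obtain c a b where P: "P = \<i> ^ c \<cdot>\<^sub>m tensor n (pauli_string a b)"
    using assms unfolding pauli_group_iff by blast
  define e where "e t = (if t \<in> a \<and> t \<in> b then 1 else 0 :: nat)" for t
  have "pauli_string a b t * pauli_string a b t = (-1) ^ e t \<cdot>\<^sub>m 1\<^sub>m 2" for t
    by (simp add: pauli_string_def pauli_xz_mult e_def)
  then have "tensor n (pauli_string a b) * tensor n (pauli_string a b) = (-1) ^ (\<Sum>t<n. e t) \<cdot>\<^sub>m 1\<^sub>m (2 ^ n)"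
    by (simp add: tensor_mult tensor_smult tensor_one_mat power_sum)
  then have "P * P = (\<i> ^ c * \<i> ^ c * (-1) ^ (\<Sum>t<n. e t)) \<cdot>\<^sub>m 1\<^sub>m (2 ^ n)"
    unfolding P by (simp add: mult_smult_distrib[of _ "2 ^ n" "2 ^ n" _ "2 ^ n"]
        mult_smult_assoc_mat[of _ "2 ^ n" "2 ^ n" _ "2 ^ n"] smult_smult_mat mult.assoc)
  also have "\<i> ^ c * \<i> ^ c = (-1::complex) ^ c"
    by (simp flip: power_add mult_2 add: power_mult)
  finally have "P * P = (-1) ^ (c + (\<Sum>t<n. e t)) \<cdot>\<^sub>m 1\<^sub>m (2 ^ n)"
    by (simp add: power_add)
  then show ?thesis ..
qed


section \<open>The Clifford hierarchy\<close>

lemma clifford_hierarchy_unitary: "1 \<le> l \<Longrightarrow> M \<in> clifford_hierarchy n l \<Longrightarrow> unitary_mat (2 ^ n) M"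
  by (cases l; cases "l - 1") (auto simp: pauli_group_unitary)

lemma conj_smult_unit:
  assumes "M \<in> carrier_mat N N" "P \<in> carrier_mat N N" "cmod z = 1"
  shows "(z \<cdot>\<^sub>m M) * P * adj (z \<cdot>\<^sub>m M) = M * P * adj M"
proof -
  have "(z \<cdot>\<^sub>m M) * P * adj (z \<cdot>\<^sub>m M) = (cnj z * z) \<cdot>\<^sub>m (M * P * adj M)"
    using assms by (simp add: adj_smult mult_smult_assoc_mat[of _ N N _ N]
        mult_smult_distrib[of _ N N _ N] smult_smult_mat)
  then show ?thesis
    using unit_cnj_mult[OF assms(3)] by simp
qed

lemma clifford_hierarchy_smult_unit:
  assumes "M \<in> clifford_hierarchy n (Suc (Suc k))" "cmod z = 1"
  shows "z \<cdot>\<^sub>m M \<in> clifford_hierarchy n (Suc (Suc k))"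
proof -
  have U: "unitary_mat (2 ^ n) M"
    using assms(1) by simp
  have "(z \<cdot>\<^sub>m M) * P * adj (z \<cdot>\<^sub>m M) = M * P * adj M" if "P \<in> pauli_group n" for P
    using conj_smult_unit[OF unitary_mat_carrier[OF U] pauli_group_carrier[OF that] assms(2)] .
  then show ?thesis
    using assms U by (simp add: unitary_mat_smult)
qed

lemma clifford_hierarchy_smult_unit_iff:
  assumes "cmod z = 1"
  shows "z \<cdot>\<^sub>m M \<in> clifford_hierarchy n (Suc (Suc k)) \<longleftrightarrow> M \<in> clifford_hierarchy n (Suc (Suc k))"
proof
  assume "z \<cdot>\<^sub>m M \<in> clifford_hierarchy n (Suc (Suc k))"
  then have "cnj z \<cdot>\<^sub>m (z \<cdot>\<^sub>m M) \<in> clifford_hierarchy n (Suc (Suc k))"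
    by (rule clifford_hierarchy_smult_unit) (use assms in simp)
  moreover have "cnj z \<cdot>\<^sub>m (z \<cdot>\<^sub>m M) = M"
    using unit_cnj_mult[OF assms] by (simp add: smult_smult_mat)
  ultimately show "M \<in> clifford_hierarchy n (Suc (Suc k))"
    by (simp del: clifford_hierarchy.simps)
qed (use assms clifford_hierarchy_smult_unit in blast)

lemma clifford_hierarchy_smult_ipow:
  assumes "1 \<le> l" "M \<in> clifford_hierarchy n l"
  shows "\<i> ^ c \<cdot>\<^sub>m M \<in> clifford_hierarchy n l"
proof -
  consider "l = Suc 0" | k where "l = Suc (Suc k)"
    using assms(1) by (cases l; cases "l - 1") auto
  then show ?thesis
  proof cases
    case 1
    then show ?thesis
      using assms by (simp add: pauli_group_smult_ipow)
  next
    case 2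
    then show ?thesis
      using assms(2) clifford_hierarchy_smult_unit[of M n k "\<i> ^ c"]
      by (simp add: norm_power del: clifford_hierarchy.simps)
  qed
qed

lemma clifford_hierarchy_Suc_subset:
  "clifford_hierarchy n (Suc k) \<subseteq> clifford_hierarchy n (Suc (Suc k))"
proof (induction k)
  case 0
  then show ?case
    by (auto simp: pauli_group_unitary pauli_group_mult pauli_group_adj)
next
  case (Suc k)
  then show ?case
    by auto
qed

lemma clifford_hierarchy_mono:
  assumes "1 \<le> l" "l \<le> m"
  shows "clifford_hierarchy n l \<subseteq> clifford_hierarchy n m"
proof -
  obtain l' m' where "l = Suc l'" "m = Suc m'" "l' \<le> m'"
    using assms by (metis Suc_le_D Suc_le_mono le_trans One_nat_def)
  then show ?thesis
    using lift_Suc_mono_le[of "\<lambda>j. clifford_hierarchy n (Suc j)"] clifford_hierarchy_Suc_subset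
    by auto
qed

lemma clifford_hierarchy_mult_pauli:
  assumes "M \<in> clifford_hierarchy n (Suc k)" "P \<in> pauli_group n"
  shows "M * P \<in> clifford_hierarchy n (Suc k) \<and> P * M \<in> clifford_hierarchy n (Suc k)"
  using assms
proof (induction k arbitrary: M P)
  case 0
  then show ?case
    by (simp add: pauli_group_mult)
next
  case (Suc k)
  let ?N = "2 ^ n"
  have UM: "unitary_mat ?N M" and UP: "unitary_mat ?N P"
    using Suc.prems by (auto simp: pauli_group_unitary)
  then have C: "M \<in> carrier_mat ?N ?N" "adj M \<in> carrier_mat ?N ?N" "P \<in> carrier_mat ?N ?N" "adj P \<in> carrier_mat ?N ?N"
    by (auto simp: unitary_mat_def)
  have "M * P * Q * adj (M * P) = M * (P * Q * adj P) * adj M"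
    and "P * M * Q * adj (P * M) = P * (M * Q * adj M) * adj P"
    if "Q \<in> carrier_mat ?N ?N" for Q
    using C that by (simp_all add: adj_mult assoc_mult_mat[of _ ?N ?N _ ?N _ ?N] mult_carrier_mat[of _ ?N ?N _ ?N])
  moreover have "P * Q * adj P \<in> pauli_group n" "M * Q * adj M \<in> clifford_hierarchy n (Suc k)"
    if "Q \<in> pauli_group n" for Q
    using that Suc.prems by (simp_all add: pauli_group_mult pauli_group_adj)
  ultimately show ?case
    using Suc.prems Suc.IH pauli_group_adj unitary_mat_mult[OF UM UP] unitary_mat_mult[OF UP UM]
    by (auto simp: pauli_group_carrier)
qed

lemma clifford_hierarchy_group_commutator:
  assumes "U \<in> clifford_hierarchy n (Suc (Suc k))" "P \<in> pauli_group n"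
  shows "U * P * adj U * adj P \<in> clifford_hierarchy n (Suc k)"
proof -
  have "U * P * adj U \<in> clifford_hierarchy n (Suc k)"
    using assms unfolding clifford_hierarchy.simps(3)[of n k] by blast
  then show ?thesis
    using clifford_hierarchy_mult_pauli pauli_group_adj[OF assms(2)] by blast
qed

lemma cnj_eq_ipow_if_square_sign:
  assumes "z * z = (-1::complex) ^ m"
  shows "\<exists>d. cnj z = \<i> ^ d"
proof -
  have "(z - 1) * (z + 1) = 0 \<or> (z - \<i>) * (z + \<i>) = 0"
    using assms by (cases "even m") (simp_all add: algebra_simps)
  then have "z = 1 \<or> z = -1 \<or> z = \<i> \<or> z = -\<i>"
    by (auto simp: eq_neg_iff_add_eq_0)
  moreover have "cnj 1 = \<i> ^ 0" "cnj (-1) = \<i> ^ 2" "cnj \<i> = \<i> ^ 3" "cnj (-\<i>) = \<i> ^ 1"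
    by (simp_all add: power3_eq_cube)
  ultimately show ?thesis
    by blast
qed

lemma conj_pauli_square:
  assumes W: "unitary_mat (2 ^ n) W" and P: "P \<in> pauli_group n"
  shows "\<exists>e. (W * P * adj W) * (W * P * adj W) = (-1::complex) ^ e \<cdot>\<^sub>m 1\<^sub>m (2 ^ n)"
proof -
  obtain e where e: "P * P = (-1::complex) ^ e \<cdot>\<^sub>m 1\<^sub>m (2 ^ n)"
    using pauli_group_square[OF P] by blast
  have C: "W \<in> carrier_mat (2 ^ n) (2 ^ n)" "P \<in> carrier_mat (2 ^ n) (2 ^ n)"
    using W P by (auto simp: unitary_mat_def pauli_group_carrier)
  have "(W * P * adj W) * (W * P * adj W) = W * (P * P) * adj W"
    using conj_mult[OF W C(2) C(2)] by simp
  also have "\<dots> = (-1::complex) ^ e \<cdot>\<^sub>m 1\<^sub>m (2 ^ n)"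
    unfolding e using W C by (simp add: conj_smult unitary_mat_def)
  finally show ?thesis ..
qed

text \<open>Above level 1 this is phase invariance; at level 1 both the operator and its rephasing
  square to \<open>\<plusminus>1\<close>, which forces the phase to be a power of \<open>\<i>\<close>.\<close>

lemma conj_pauli_in_clifford_hierarchy:
  assumes l: "1 \<le> l" and W: "unitary_mat (2 ^ n) W" and P: "P \<in> pauli_group n"
    and z: "cmod z = 1" and in_l: "z \<cdot>\<^sub>m (W * P * adj W) \<in> clifford_hierarchy n l"
  shows "W * P * adj W \<in> clifford_hierarchy n l"
proof -
  let ?N = "2 ^ n" and ?M = "W * P * adj W"
  have CM: "?M \<in> carrier_mat ?N ?N"
    using W P by (auto simp: unitary_mat_def pauli_group_carrier)
  have M_eq: "?M = cnj z \<cdot>\<^sub>m (z \<cdot>\<^sub>m ?M)"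
    using unit_cnj_mult[OF z] by (simp add: smult_smult_mat)
  consider "l = Suc 0" | k where "l = Suc (Suc k)"
    using l by (cases l; cases "l - 1") auto
  then show ?thesis
  proof cases
    case 1
    then have R: "z \<cdot>\<^sub>m ?M \<in> pauli_group n"
      using in_l by simp
    obtain e where e: "?M * ?M = (-1::complex) ^ e \<cdot>\<^sub>m 1\<^sub>m ?N"
      using conj_pauli_square[OF W P] by blast
    obtain f where f: "(z \<cdot>\<^sub>m ?M) * (z \<cdot>\<^sub>m ?M) = (-1::complex) ^ f \<cdot>\<^sub>m 1\<^sub>m ?N"
      using pauli_group_square[OF R] by blast
    have "(z \<cdot>\<^sub>m ?M) * (z \<cdot>\<^sub>m ?M) = (z * z * (-1) ^ e) \<cdot>\<^sub>m 1\<^sub>m ?N"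
      using CM by (simp add: e mult_smult_distrib[of _ ?N ?N _ ?N] mult_smult_assoc_mat[of _ ?N ?N _ ?N]
          smult_smult_mat mult.assoc)
    then have "z * z * (-1) ^ e = (-1::complex) ^ f"
      using arg_cong[OF f, of "\<lambda>A. A $$ (0, 0)"] by simp
    then have "z * z = (-1::complex) ^ (f + e)"
      by (auto simp: power_add minus_one_power_iff minus_equation_iff[of "z * z"] split: if_splits)
    then obtain d where "cnj z = \<i> ^ d"
      using cnj_eq_ipow_if_square_sign by blast
    then have "?M \<in> pauli_group n"
      using M_eq pauli_group_smult_ipow[OF R] by metis
    then show ?thesis
      using 1 by simp
  next
    case (2 k)
    then show ?thesis
      using M_eq clifford_hierarchy_smult_unit[of "z \<cdot>\<^sub>m ?M" n k "cnj z"] in_l z by simp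
  qed
qed

lemma clifford_hierarchy_1_Suc_Suc_iff:
  "W \<in> clifford_hierarchy 1 (Suc (Suc k)) \<longleftrightarrow>
    unitary_mat 2 W \<and> (\<forall>\<alpha> \<beta>. W * pauli_xz \<alpha> \<beta> * adj W \<in> clifford_hierarchy 1 (Suc k))"
proof
  assume "W \<in> clifford_hierarchy 1 (Suc (Suc k))"
  then show "unitary_mat 2 W \<and> (\<forall>\<alpha> \<beta>. W * pauli_xz \<alpha> \<beta> * adj W \<in> clifford_hierarchy 1 (Suc k))"
    using pauli_xz_in_pauli_group by simp
next
  assume W: "unitary_mat 2 W \<and> (\<forall>\<alpha> \<beta>. W * pauli_xz \<alpha> \<beta> * adj W \<in> clifford_hierarchy 1 (Suc k))"
  have "W * P * adj W \<in> clifford_hierarchy 1 (Suc k)" if P: "P \<in> pauli_group 1" for P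
  proof -
    obtain c \<alpha> \<beta> where "P = \<i> ^ c \<cdot>\<^sub>m pauli_xz \<alpha> \<beta>"
      using P unfolding pauli_group_1_iff by blast
    then have "W * P * adj W = \<i> ^ c \<cdot>\<^sub>m (W * pauli_xz \<alpha> \<beta> * adj W)"
      using W conj_smult[of W 2] by (simp add: unitary_mat_def)
    then show ?thesis
      using W clifford_hierarchy_smult_ipow[of "Suc k"] by simp
  qed
  then show "W \<in> clifford_hierarchy 1 (Suc (Suc k))"
    using W by simp
qed


section \<open>Tensor products in the Clifford hierarchy\<close>

lemma tensor_in_clifford_hierarchy:
  assumes "\<And>t. t < n \<Longrightarrow> C t \<in> clifford_hierarchy 1 (Suc k)"
  shows "tensor n C \<in> clifford_hierarchy n (Suc k)"
  using assms
proof (induction k arbitrary: C)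
  case 0
  then show ?case
    by (simp add: tensor_in_pauli_group)
next
  case (Suc k)
  have U: "\<And>t. t < n \<Longrightarrow> unitary_mat 2 (C t)"
    using Suc.prems by simp
  then have cC: "\<And>t. t < n \<Longrightarrow> C t \<in> carrier_mat 2 2"
    by (simp add: unitary_mat_def)
  have "tensor n C * P * adj (tensor n C) \<in> clifford_hierarchy n (Suc k)" if P: "P \<in> pauli_group n" for P
  proof -
    obtain c a b where P_eq: "P = \<i> ^ c \<cdot>\<^sub>m tensor n (pauli_string a b)"
      using P unfolding pauli_group_iff by blast
    have "tensor n C * P * adj (tensor n C) = \<i> ^ c \<cdot>\<^sub>m tensor n (\<lambda>t. C t * pauli_string a b t * adj (C t))"
      using cC by (simp add: P_eq conj_smult[of "tensor n C" "2 ^ n"] tensor_conj)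
    moreover have "tensor n (\<lambda>t. C t * pauli_string a b t * adj (C t)) \<in> clifford_hierarchy n (Suc k)"
      using Suc.prems by (intro Suc.IH) (simp add: pauli_string_def pauli_xz_in_pauli_group)
    ultimately show ?thesis
      by (simp add: clifford_hierarchy_smult_ipow)
  qed
  then show ?case
    using U tensor_unitary_mat by simp
qed

lemma unitary_mat_ex_nonzero_entry:
  assumes "unitary_mat N U" "0 < N"
  shows "\<exists>p q. p < N \<and> q < N \<and> U $$ (p, q) \<noteq> 0"
proof (rule ccontr)
  assume "\<not> ?thesis"
  then have zero: "U $$ (0, i) = 0" if "i < N" for i
    using assms(2) that by blast
  have dims: "dim_row U = N" "dim_col U = N"
    using assms(1) by (auto simp: unitary_mat_def)
  have "(U * adj U) $$ (0, 0) = (\<Sum>i<N. U $$ (0, i) * cnj (U $$ (0, i)))"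
    using assms(2) dims by (simp add: scalar_prod_def lessThan_atLeast0)
  also have "\<dots> = 0"
    using zero by simp
  finally show False
    using assms by (simp add: unitary_mat_def)
qed

lemma tensor_factor_in_pauli_group:
  assumes U: "\<And>s. s < n \<Longrightarrow> unitary_mat 2 (C s)" and T: "tensor n C \<in> pauli_group n" and t: "t < n"
  shows "\<exists>z. cmod z = 1 \<and> z \<cdot>\<^sub>m C t \<in> pauli_group 1"
proof -
  obtain c a b where eq: "tensor n C = \<i> ^ c \<cdot>\<^sub>m tensor n (pauli_string a b)"
    using T unfolding pauli_group_iff by blast
  have cC: "\<And>s. s < n \<Longrightarrow> C s \<in> carrier_mat 2 2"
    using U unitary_mat_carrier by blast
  have "\<exists>p q. p < 2 \<and> q < 2 \<and> C s $$ (p, q) \<noteq> 0" if "s < n" for s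
    using unitary_mat_ex_nonzero_entry[OF U[OF that]] by simp
  then obtain l where l: "C t = l \<cdot>\<^sub>m pauli_string a b t"
    using tensor_factor_proportional[OF cC pauli_string_carrier _ eq t] by blast
  let ?S = "pauli_string a b t"
  have "1\<^sub>m 2 = C t * adj (C t)"
    using U[OF t] by (simp add: unitary_mat_def)
  also have "\<dots> = (l * cnj l) \<cdot>\<^sub>m (?S * adj ?S)"
    unfolding l adj_smult by (simp add: mult_smult_distrib[of _ 2 2 _ 2]
        mult_smult_assoc_mat[of _ 2 2 _ 2] smult_smult_mat mult.commute)
  also have "?S * adj ?S = 1\<^sub>m 2"
    using pauli_xz_unitary by (simp add: pauli_string_def unitary_mat_def)
  finally have "(1\<^sub>m 2 :: complex mat) $$ (0, 0) = ((l * cnj l) \<cdot>\<^sub>m 1\<^sub>m 2) $$ (0, 0)"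
    by simp
  then have "l * cnj l = 1"
    by simp
  then have "cmod (cnj l) = 1" "cnj l \<cdot>\<^sub>m C t = ?S"
    using unit_if_mult_cnj by (simp_all add: l smult_smult_mat mult.commute)
  then show ?thesis
    using pauli_xz_in_pauli_group by (metis pauli_string_def)
qed

lemma tensor_factor_in_clifford_hierarchy:
  assumes "\<And>s. s < n \<Longrightarrow> unitary_mat 2 (C s)" "tensor n C \<in> clifford_hierarchy n (Suc k)" "t < n"
  shows "\<exists>z. cmod z = 1 \<and> z \<cdot>\<^sub>m C t \<in> clifford_hierarchy 1 (Suc k)"
  using assms
proof (induction k arbitrary: C t)
  case 0
  then show ?case
    using tensor_factor_in_pauli_group[of n C t] by simp
next
  case (Suc k)
  have cC: "\<And>s. s < n \<Longrightarrow> C s \<in> carrier_mat 2 2"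
    using Suc.prems(1) by (simp add: unitary_mat_def)
  have "C t * pauli_xz \<alpha> \<beta> * adj (C t) \<in> clifford_hierarchy 1 (Suc k)" for \<alpha> \<beta>
  proof -
    define D where "D s = (if s = t then pauli_xz \<alpha> \<beta> else 1\<^sub>m 2)" for s
    have "tensor n D \<in> pauli_group n"
      by (intro tensor_in_pauli_group) (metis D_def pauli_xz_False_False pauli_xz_in_pauli_group)
    then have "tensor n C * tensor n D * adj (tensor n C) \<in> clifford_hierarchy n (Suc k)"
      using Suc.prems(2) by simp
    then have "tensor n (\<lambda>s. C s * D s * adj (C s)) \<in> clifford_hierarchy n (Suc k)"
      using cC by (simp add: tensor_conj D_def)
    moreover have "unitary_mat 2 (C s * D s * adj (C s))" if "s < n" for s
    proof -
      have "unitary_mat 2 (D s)"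
        using pauli_xz_unitary by (simp add: D_def unitary_mat_def)
      then show ?thesis
        using Suc.prems(1)[OF that] by (intro unitary_mat_mult unitary_mat_adj)
    qed
    ultimately obtain z where "cmod z = 1" "z \<cdot>\<^sub>m (C t * pauli_xz \<alpha> \<beta> * adj (C t)) \<in> clifford_hierarchy 1 (Suc k)"
      using Suc.IH[of "\<lambda>s. C s * D s * adj (C s)" t] Suc.prems(3) by (auto simp: D_def)
    then show ?thesis
      using conj_pauli_in_clifford_hierarchy[of "Suc k" 1 "C t" "pauli_xz \<alpha> \<beta>" z]
        Suc.prems(1,3) pauli_xz_in_pauli_group by simp
  qed
  then have "C t \<in> clifford_hierarchy 1 (Suc (Suc k))"
    using Suc.prems(1,3) clifford_hierarchy_1_Suc_Suc_iff by blast
  then show ?case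
    by (intro exI[of _ 1]) simp
qed

text \<open>The \<open>t\<close>-th factor of the commutator, multiplied by \<open>P t\<close>, is \<open>C t P t C t\<^sup>\<dagger>\<close> up to
  a phase.\<close>

lemma conj_factor_in_clifford_hierarchy_if_commutator:
  assumes C: "\<And>s. s < n \<Longrightarrow> unitary_mat 2 (C s)" and P: "\<And>s. s < n \<Longrightarrow> P s \<in> pauli_group 1"
    and E: "tensor n (\<lambda>s. C s * P s * adj (C s) * adj (P s)) \<in> clifford_hierarchy n (Suc k)" and t: "t < n"
  shows "C t * P t * adj (C t) \<in> clifford_hierarchy 1 (Suc k)"
proof -
  let ?M = "C t * P t * adj (C t)"
  have UP: "unitary_mat 2 (P s)" if "s < n" for s
    using pauli_group_unitary[OF P[OF that]] by simp
  have "unitary_mat 2 (C s * P s * adj (C s) * adj (P s))" if "s < n" for s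
    using C[OF that] UP[OF that] by (intro unitary_mat_mult unitary_mat_adj)
  then obtain z where z: "cmod z = 1" "z \<cdot>\<^sub>m (?M * adj (P t)) \<in> clifford_hierarchy 1 (Suc k)"
    using tensor_factor_in_clifford_hierarchy[OF _ E t] by blast
  have CM: "?M \<in> carrier_mat 2 2" and CP: "P t \<in> carrier_mat 2 2" "adj (P t) * P t = 1\<^sub>m 2"
    using C[OF t] UP[OF t] by (auto simp: unitary_mat_def intro!: mult_carrier_mat[of _ 2 2 _ 2])
  have "(z \<cdot>\<^sub>m (?M * adj (P t))) * P t = z \<cdot>\<^sub>m ?M"
    using CM CP by (simp add: mult_smult_assoc_mat[of _ 2 2 _ 2] assoc_mult_mat[of _ 2 2 _ 2 _ 2]
        right_mult_one_mat[OF CM])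
  then have "z \<cdot>\<^sub>m ?M \<in> clifford_hierarchy 1 (Suc k)"
    using clifford_hierarchy_mult_pauli[OF z(2) P[OF t]] by simp
  then show ?thesis
    using conj_pauli_in_clifford_hierarchy[of "Suc k" 1 "C t" "P t" z] C[OF t] z(1) P[OF t] by simp
qed


section \<open>Single-qubit gates fixing a stabilizer state\<close>

lemma pauli_X_index: "p < 2 \<Longrightarrow> q < 2 \<Longrightarrow> pauli_X $$ (p, q) = (if p \<noteq> q then 1 else 0)"
  by (simp add: pauli_X_def)

lemma pauli_Z_index: "p < 2 \<Longrightarrow> q < 2 \<Longrightarrow> pauli_Z $$ (p, q) = (if p = q then (if p = 0 then 1 else -1) else 0)"
  by (simp add: pauli_Z_def)

lemma pauli_X_square: "pauli_X * pauli_X = 1\<^sub>m 2"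
  using pauli_xz_mult[of True False True False] by (simp add: pauli_xz_True_False)

lemma pauli_Z_square: "pauli_Z * pauli_Z = 1\<^sub>m 2"
  using pauli_xz_mult[of False True False True] by (simp add: pauli_xz_False_True)

lemma pauli_X_in_pauli_group: "pauli_X \<in> pauli_group 1"
  using pauli_xz_in_pauli_group[of True False] by (simp add: pauli_xz_True_False)

lemma pauli_Z_in_pauli_group: "pauli_Z \<in> pauli_group 1"
  using pauli_xz_in_pauli_group[of False True] by (simp add: pauli_xz_False_True)

lemma mult_pauli_X_index:
  "W \<in> carrier_mat 2 2 \<Longrightarrow> p < 2 \<Longrightarrow> q < 2 \<Longrightarrow> (W * pauli_X) $$ (p, q) = W $$ (p, 1 - q)"
  by (auto simp: index_mult_mat_2 pauli_X_index less_2_cases_iff simp del: index_mult_mat)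

lemma pauli_X_mult_index:
  "W \<in> carrier_mat 2 2 \<Longrightarrow> p < 2 \<Longrightarrow> q < 2 \<Longrightarrow> (pauli_X * W) $$ (p, q) = W $$ (1 - p, q)"
  by (auto simp: index_mult_mat_2 pauli_X_index less_2_cases_iff simp del: index_mult_mat)

lemma mult_pauli_Z_index:
  "W \<in> carrier_mat 2 2 \<Longrightarrow> p < 2 \<Longrightarrow> q < 2 \<Longrightarrow> (W * pauli_Z) $$ (p, q) = W $$ (p, q) * (if q = 0 then 1 else -1)"
  by (auto simp: index_mult_mat_2 pauli_Z_index less_2_cases_iff simp del: index_mult_mat)

lemma pauli_Z_mult_index:
  "W \<in> carrier_mat 2 2 \<Longrightarrow> p < 2 \<Longrightarrow> q < 2 \<Longrightarrow> (pauli_Z * W) $$ (p, q) = (if p = 0 then 1 else -1) * W $$ (p, q)"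
  by (auto simp: index_mult_mat_2 pauli_Z_index less_2_cases_iff simp del: index_mult_mat)

lemma pauli_Z_conj_index:
  assumes "W \<in> carrier_mat 2 2" "p < 2" "q < 2"
  shows "(pauli_Z * W * pauli_Z) $$ (p, q) = (if p = q then 1 else -1) * W $$ (p, q)"
  using assms mult_carrier_mat[OF pauli_Z_carrier assms(1)]
  by (auto simp: index_mult_mat_2 pauli_Z_index less_2_cases_iff simp del: index_mult_mat)

lemma pauli_X_conj_index:
  assumes "W \<in> carrier_mat 2 2" "p < 2" "q < 2"
  shows "(pauli_X * W * pauli_X) $$ (p, q) = W $$ (1 - p, 1 - q)"
  using assms mult_carrier_mat[OF pauli_X_carrier assms(1)]
  by (auto simp: index_mult_mat_2 pauli_X_index less_2_cases_iff simp del: index_mult_mat)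

lemma index_mult_mat_vec_2:
  "W \<in> carrier_mat 2 2 \<Longrightarrow> v \<in> carrier_vec 2 \<Longrightarrow> p < 2 \<Longrightarrow> (W *\<^sub>v v) $ p = W $$ (p, 0) * v $ 0 + W $$ (p, 1) * v $ 1"
  by (simp add: mult_mat_vec_def scalar_prod_def numeral_2_eq_2 One_nat_def)

lemma conj_eq_if_commute:
  assumes U: "unitary_mat 2 W" and S: "S \<in> carrier_mat 2 2" and WS: "W * S = S * W"
  shows "W * S * adj W = S"
proof -
  have C: "W \<in> carrier_mat 2 2" "adj W \<in> carrier_mat 2 2"
    using U by (auto simp: unitary_mat_def)
  have "W * S * adj W = S * W * adj W"
    by (simp only: WS)
  also have "\<dots> = S * (W * adj W)"
    using S C by (rule assoc_mult_mat)
  finally show ?thesis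
    using U S by (simp add: unitary_mat_def)
qed

lemma conj_eq_smult_mult_adj_square:
  assumes U: "unitary_mat 2 W" and R: "R \<in> carrier_mat 2 2" and RR: "R * R = 1\<^sub>m 2"
    and RWR: "R * W * R = w \<cdot>\<^sub>m adj W"
  shows "W * R * adj W = w \<cdot>\<^sub>m (R * (adj W * adj W))"
proof -
  have C: "W \<in> carrier_mat 2 2" "adj W \<in> carrier_mat 2 2"
    using U by (auto simp: unitary_mat_def)
  have "W * R * adj W = (R * R) * W * R * adj W"
    using C R RR by simp
  also have "\<dots> = R * (R * W * R) * adj W"
    using C R by (simp add: assoc_mult_mat[of _ 2 2 _ 2 _ 2] mult_carrier_mat[of _ 2 2 _ 2])
  also have "\<dots> = w \<cdot>\<^sub>m (R * (adj W * adj W))"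
    using C R by (simp add: RWR mult_smult_distrib[of _ 2 2 _ 2] mult_smult_assoc_mat[of _ 2 2 _ 2]
        assoc_mult_mat[of _ 2 2 _ 2 _ 2])
  finally show ?thesis .
qed

lemma unitary_fixing_plus_entries:
  assumes U: "unitary_mat 2 W" and W_plus: "W *\<^sub>v vec 2 (\<lambda>_. 1) = vec 2 (\<lambda>_. 1)"
  shows "W $$ (1, 0) = W $$ (0, 1)" "W $$ (1, 1) = W $$ (0, 0)" "W $$ (0, 0) + W $$ (0, 1) = 1"
    "W $$ (0, 1) * cnj (W $$ (0, 0)) = - (W $$ (0, 0) * cnj (W $$ (0, 1)))"
proof -
  let ?v = "vec 2 (\<lambda>_. 1) :: complex vec"
  have C: "W \<in> carrier_mat 2 2" "adj W \<in> carrier_mat 2 2"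
    using U by (auto simp: unitary_mat_def)
  have "adj W *\<^sub>v ?v = adj W *\<^sub>v (W *\<^sub>v ?v)"
    using W_plus by simp
  also have "\<dots> = (adj W * W) *\<^sub>v ?v"
    using C by (simp add: assoc_mult_mat_vec[of _ 2 2 _ 2])
  finally have adj_plus: "adj W *\<^sub>v ?v = ?v"
    using U by (simp add: unitary_mat_def)
  define a b c d where "a = W $$ (0, 0)" "b = W $$ (0, 1)" "c = W $$ (1, 0)" "d = W $$ (1, 1)"
  have row_sums: "a + b = 1" "c + d = 1"
    using arg_cong[OF W_plus, of "\<lambda>x. x $ 0"] arg_cong[OF W_plus, of "\<lambda>x. x $ 1"] C
    by (auto simp: index_mult_mat_vec_2 a_b_c_d_def simp del: index_mult_mat_vec)
  have col_sums: "cnj a + cnj c = 1" "cnj b + cnj d = 1"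
    using arg_cong[OF adj_plus, of "\<lambda>x. x $ 0"] arg_cong[OF adj_plus, of "\<lambda>x. x $ 1"] C
    by (auto simp: index_mult_mat_vec_2 a_b_c_d_def adj_index_carrier simp del: index_mult_mat_vec)
  have "a + c = 1" "b + d = 1"
    using arg_cong[OF col_sums(1), of cnj] arg_cong[OF col_sums(2), of cnj] by simp_all
  then have cb: "c = b" and da: "d = a"
    using row_sums(1) by (metis add_left_imp_eq, metis add.commute add_left_imp_eq)
  have "(W * adj W) $$ (0, 1) = 0"
    using U by (simp add: unitary_mat_def)
  then have "a * cnj c + b * cnj d = 0"
    using C by (simp add: index_mult_mat_2 adj_index_carrier a_b_c_d_def del: index_mult_mat)
  then show "W $$ (1, 0) = W $$ (0, 1)" "W $$ (1, 1) = W $$ (0, 0)" "W $$ (0, 0) + W $$ (0, 1) = 1"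
    "W $$ (0, 1) * cnj (W $$ (0, 0)) = - (W $$ (0, 0) * cnj (W $$ (0, 1)))"
    using cb da row_sums unfolding a_b_c_d_def
    by (simp_all add: eq_neg_iff_add_eq_0 add.commute mult.commute)
qed

text \<open>Such \<open>W\<close> is \<open>[[a, b], [b, a]]\<close> with \<open>a + b = 1\<close>; the phase is \<open>w = a - b\<close>.\<close>

lemma unitary_fixing_plus_conj_paulis:
  assumes U: "unitary_mat 2 W" and W_plus: "W *\<^sub>v vec 2 (\<lambda>_. 1) = vec 2 (\<lambda>_. 1)"
  shows "\<exists>w. cmod w = 1 \<and> W * pauli_X * adj W = pauli_X \<and> W * pauli_Z * adj W = w \<cdot>\<^sub>m (pauli_Z * (adj W * adj W))"
proof -
  have C: "W \<in> carrier_mat 2 2" "adj W \<in> carrier_mat 2 2"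
    using U by (auto simp: unitary_mat_def)
  define a b where "a = W $$ (0, 0)" "b = W $$ (0, 1)"
  note entries = unitary_fixing_plus_entries[OF U W_plus, folded a_b_def]
  have sum: "cnj a + cnj b = 1"
    using arg_cong[OF entries(3), of cnj] by simp
  define w where "w = a - b"
  have wa: "w * cnj a = a" and wb: "w * cnj b = - b"
  proof -
    have "w * cnj a = a * (cnj a + cnj b)" "w * cnj b = - b * (cnj a + cnj b)"
      using entries(4) by (simp_all add: w_def algebra_simps)
    then show "w * cnj a = a" "w * cnj b = - b"
      using sum by simp_all
  qed
  have "w * cnj w = w * cnj a - w * cnj b"
    by (simp add: w_def algebra_simps)
  then have "w * cnj w = 1"
    using wa wb entries(3) by simp
  moreover have "pauli_Z * W * pauli_Z = w \<cdot>\<^sub>m adj W"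
  proof (rule eq_matI)
    fix i j
    assume "i < dim_row (w \<cdot>\<^sub>m adj W)" "j < dim_col (w \<cdot>\<^sub>m adj W)"
    then have ij: "i < 2" "j < 2"
      using C by auto
    show "(pauli_Z * W * pauli_Z) $$ (i, j) = (w \<cdot>\<^sub>m adj W) $$ (i, j)"
      unfolding pauli_Z_conj_index[OF C(1) ij] using ij C wa wb entries(1,2)
      by (auto simp: adj_index_carrier less_2_cases_iff a_b_def One_nat_def)
  qed (use C in \<open>simp_all add: carrier_matD[OF pauli_Z_carrier]\<close>)
  moreover have "W * pauli_X = pauli_X * W"
  proof (rule eq_matI)
    fix i j
    assume "i < dim_row (pauli_X * W)" "j < dim_col (pauli_X * W)"
    then have ij: "i < 2" "j < 2"
      using C by (auto simp: carrier_matD[OF pauli_X_carrier])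
    show "(W * pauli_X) $$ (i, j) = (pauli_X * W) $$ (i, j)"
      unfolding mult_pauli_X_index[OF C(1) ij] pauli_X_mult_index[OF C(1) ij]
      using ij unitary_fixing_plus_entries(1,2)[OF U W_plus] by (auto simp: less_2_cases_iff One_nat_def)
  qed (use C in \<open>simp_all add: carrier_matD[OF pauli_X_carrier]\<close>)
  ultimately show ?thesis
    using conj_eq_smult_mult_adj_square[OF U pauli_Z_carrier pauli_Z_square]
      conj_eq_if_commute[OF U pauli_X_carrier] unit_if_mult_cnj by blast
qed

lemma unitary_fixing_zero_conj_paulis:
  assumes U: "unitary_mat 2 W" and W_zero: "W *\<^sub>v unit_vec 2 0 = unit_vec 2 0"
  shows "\<exists>w. cmod w = 1 \<and> W * pauli_Z * adj W = pauli_Z \<and> W * pauli_X * adj W = w \<cdot>\<^sub>m (pauli_X * (adj W * adj W))"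
proof -
  have C: "W \<in> carrier_mat 2 2" "adj W \<in> carrier_mat 2 2"
    using U by (auto simp: unitary_mat_def)
  have a: "W $$ (0, 0) = 1" and c: "W $$ (1, 0) = 0"
    using arg_cong[OF W_zero, of "\<lambda>x. x $ 0"] arg_cong[OF W_zero, of "\<lambda>x. x $ 1"] C
    by (auto simp: index_mult_mat_vec_2 simp del: index_mult_mat_vec)
  have "(W * adj W) $$ (0, 0) = 1" "(W * adj W) $$ (1, 1) = 1"
    using U by (simp_all add: unitary_mat_def)
  then have "W $$ (0, 0) * cnj (W $$ (0, 0)) + W $$ (0, 1) * cnj (W $$ (0, 1)) = 1"
    and "W $$ (1, 0) * cnj (W $$ (1, 0)) + W $$ (1, 1) * cnj (W $$ (1, 1)) = 1"
    using C by (simp_all add: index_mult_mat_2 adj_index_carrier del: index_mult_mat)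
  then have b: "W $$ (0, 1) = 0" and dd: "W $$ (1, 1) * cnj (W $$ (1, 1)) = 1"
    using a c by simp_all
  define w where "w = W $$ (1, 1)"
  have "pauli_X * W * pauli_X = w \<cdot>\<^sub>m adj W"
  proof (rule eq_matI)
    fix i j
    assume "i < dim_row (w \<cdot>\<^sub>m adj W)" "j < dim_col (w \<cdot>\<^sub>m adj W)"
    then have ij: "i < 2" "j < 2"
      using C by auto
    show "(pauli_X * W * pauli_X) $$ (i, j) = (w \<cdot>\<^sub>m adj W) $$ (i, j)"
      unfolding pauli_X_conj_index[OF C(1) ij] using ij C a b c dd
      by (auto simp: adj_index_carrier less_2_cases_iff w_def mult.commute One_nat_def)
  qed (use C in \<open>simp_all add: carrier_matD[OF pauli_X_carrier]\<close>)
  moreover have "W * pauli_Z = pauli_Z * W"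
  proof (rule eq_matI)
    fix i j
    assume "i < dim_row (pauli_Z * W)" "j < dim_col (pauli_Z * W)"
    then have ij: "i < 2" "j < 2"
      using C by (auto simp: carrier_matD[OF pauli_Z_carrier])
    show "(W * pauli_Z) $$ (i, j) = (pauli_Z * W) $$ (i, j)"
      unfolding mult_pauli_Z_index[OF C(1) ij] pauli_Z_mult_index[OF C(1) ij]
      using ij b c by (auto simp: less_2_cases_iff One_nat_def)
  qed (use C in \<open>simp_all add: carrier_matD[OF pauli_Z_carrier]\<close>)
  ultimately show ?thesis
    using conj_eq_smult_mult_adj_square[OF U pauli_X_carrier pauli_X_square]
      conj_eq_if_commute[OF U pauli_Z_carrier] unit_if_mult_cnj dd
    unfolding w_def by blast
qed


lemma clifford_hierarchy_1_by_generators: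
  assumes U: "unitary_mat 2 W" and S: "S \<in> pauli_group 1" and R: "R \<in> pauli_group 1"
    and WS: "W * S * adj W = S" and WR: "W * R * adj W \<in> clifford_hierarchy 1 (Suc k)"
    and gen: "\<And>\<alpha> \<beta>. \<exists>c x y. pauli_xz \<alpha> \<beta> = \<i> ^ c \<cdot>\<^sub>m ((if x then S else 1\<^sub>m 2) * (if y then R else 1\<^sub>m 2))"
  shows "W \<in> clifford_hierarchy 1 (Suc (Suc k))"
proof -
  have CW: "W \<in> carrier_mat 2 2" "adj W \<in> carrier_mat 2 2"
    using U by (auto simp: unitary_mat_def)
  have "W * pauli_xz \<alpha> \<beta> * adj W \<in> clifford_hierarchy 1 (Suc k)" for \<alpha> \<beta>
  proof -
    obtain c x y where dec: "pauli_xz \<alpha> \<beta> = \<i> ^ c \<cdot>\<^sub>m ((if x then S else 1\<^sub>m 2) * (if y then R else 1\<^sub>m 2))"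
      using gen by blast
    define Sx Ry where "Sx = (if x then S else 1\<^sub>m 2)" "Ry = (if y then R else 1\<^sub>m 2)"
    have Sx: "Sx \<in> pauli_group 1" "Sx \<in> carrier_mat 2 2" "W * Sx * adj W = Sx"
      using S WS U pauli_xz_in_pauli_group[of False False] pauli_group_carrier[of S 1]
      by (auto simp: Sx_Ry_def unitary_mat_def)
    have Ry: "Ry \<in> carrier_mat 2 2" "W * Ry * adj W \<in> clifford_hierarchy 1 (Suc k)"
      using R WR U pauli_xz_in_pauli_group[of False False] clifford_hierarchy_mono[of 1 "Suc k" 1]
        pauli_group_carrier[of R 1]
      by (auto simp: Sx_Ry_def unitary_mat_def right_mult_one_mat[OF CW(1)] One_nat_def)
    have "W * pauli_xz \<alpha> \<beta> * adj W = \<i> ^ c \<cdot>\<^sub>m (W * (Sx * Ry) * adj W)"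
      unfolding dec Sx_Ry_def[symmetric] by (rule conj_smult) (use CW Sx Ry in auto)
    also have "W * (Sx * Ry) * adj W = Sx * (W * Ry * adj W)"
      by (simp only: conj_mult[OF U Sx(2) Ry(1)] Sx(3))
    finally show ?thesis
      using clifford_hierarchy_mult_pauli[OF Ry(2) Sx(1)] clifford_hierarchy_smult_ipow[of "Suc k"] by simp
  qed
  then show ?thesis
    using U clifford_hierarchy_1_Suc_Suc_iff by blast
qed

text \<open>Conjugation by \<open>W\<close> fixes \<open>S\<close> and sends \<open>R\<close> to \<open>R W\<^sup>\<dagger>\<^sup>2\<close> up to a phase, and \<open>S\<close>, \<open>R\<close>
  generate all Paulis; so \<open>W\<^sup>\<dagger>\<^sup>2\<close> lies exactly one level below \<open>W\<close>.\<close>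

lemma single_qubit_descent:
  assumes W3: "W \<in> clifford_hierarchy 1 (Suc (Suc (Suc k)))" and W2: "W \<notin> clifford_hierarchy 1 (Suc (Suc k))"
    and S: "S \<in> pauli_group 1" and R: "R \<in> pauli_group 1" and RR: "R * R = 1\<^sub>m 2"
    and w: "cmod w = 1" and WS: "W * S * adj W = S" and WR: "W * R * adj W = w \<cdot>\<^sub>m (R * (adj W * adj W))"
    and gen: "\<And>\<alpha> \<beta>. \<exists>c x y. pauli_xz \<alpha> \<beta> = \<i> ^ c \<cdot>\<^sub>m ((if x then S else 1\<^sub>m 2) * (if y then R else 1\<^sub>m 2))"
  shows "adj W * adj W \<in> clifford_hierarchy 1 (Suc (Suc k)) \<and> adj W * adj W \<notin> clifford_hierarchy 1 (Suc k)"
proof -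
  define V where "V = adj W * adj W"
  have U: "unitary_mat 2 W"
    using W3 by simp
  have CR: "R \<in> carrier_mat 2 2" and CV: "V \<in> carrier_mat 2 2"
    using R U pauli_group_carrier[of R 1] by (auto simp: V_def unitary_mat_def)
  have RV_eq: "R * V = cnj w \<cdot>\<^sub>m (W * R * adj W)"
    using unit_cnj_mult[OF w] by (simp add: WR V_def smult_smult_mat)
  have "W * R * adj W \<in> clifford_hierarchy 1 (Suc (Suc k))"
    using W3 R unfolding clifford_hierarchy.simps(3)[of 1 "Suc k"] by blast
  then have "R * V \<in> clifford_hierarchy 1 (Suc (Suc k))"
    unfolding RV_eq using w by (simp add: clifford_hierarchy_smult_unit_iff del: clifford_hierarchy.simps)
  moreover have "R * (R * V) = V"
    using CR CV RR by (simp flip: assoc_mult_mat[OF CR CR CV])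
  ultimately have "V \<in> clifford_hierarchy 1 (Suc (Suc k))"
    using clifford_hierarchy_mult_pauli[OF _ R] by metis
  moreover have "V \<notin> clifford_hierarchy 1 (Suc k)"
  proof
    assume "V \<in> clifford_hierarchy 1 (Suc k)"
    then have "cnj w \<cdot>\<^sub>m (W * R * adj W) \<in> clifford_hierarchy 1 (Suc k)"
      using clifford_hierarchy_mult_pauli R by (simp flip: RV_eq)
    then have "W * R * adj W \<in> clifford_hierarchy 1 (Suc k)"
      using conj_pauli_in_clifford_hierarchy[of "Suc k" 1 W R "cnj w"] U R w by simp
    then show False
      using clifford_hierarchy_1_by_generators[OF U S R WS _ gen] W2 by blast
  qed
  ultimately show ?thesis
    by (simp add: V_def)
qed

section \<open>CSS codes and their logical identities\<close>

lemma f2_add_empty [simp]: "f2_add {} a = a" "f2_add a {} = a"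
  by (auto simp: f2_add_def)

lemma subspace_splits_singleton_if_mem:
  assumes S: "f2_subspace n S" and t: "{t} \<in> S"
  shows "subspace_splits n S {t}"
proof -
  have tn: "t < n"
    using S t by (auto simp: f2_subspace_def)
  define S2 where "S2 = {a \<in> S. t \<notin> a}"
  have "S \<subseteq> {f2_add a1 a2 |a1 a2. a1 \<in> {{}, {t}} \<and> a2 \<in> S2}"
  proof
    fix s
    assume s: "s \<in> S"
    show "s \<in> {f2_add a1 a2 |a1 a2. a1 \<in> {{}, {t}} \<and> a2 \<in> S2}"
    proof (cases "t \<in> s")
      case True
      have "f2_add s {t} \<in> S"
        using S s t by (auto simp: f2_subspace_def)
      moreover have "f2_add s {t} = s - {t}" "s = f2_add {t} (s - {t})"
        using True by (auto simp: f2_add_def)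
      ultimately have "s = f2_add {t} (s - {t}) \<and> {t} \<in> {{}, {t}} \<and> s - {t} \<in> S2"
        unfolding S2_def by simp
      then show ?thesis
        by blast
    next
      case False
      then have "s = f2_add {} s \<and> {} \<in> {{}, {t}} \<and> s \<in> S2"
        using s unfolding S2_def by simp
      then show ?thesis
        by blast
    qed
  qed
  moreover have "{f2_add a1 a2 |a1 a2. a1 \<in> {{}, {t}} \<and> a2 \<in> S2} \<subseteq> S"
    using S t unfolding S2_def f2_subspace_def by auto
  moreover have "f2_subspace n {{}, {t}}" "f2_subspace n S2"
    using S tn unfolding S2_def f2_subspace_def by (auto simp: f2_add_def)
  moreover have "\<forall>a\<in>S2. a \<subseteq> {0..<n} - {t}" "\<forall>a\<in>{{}, {t}}. a \<subseteq> {t}"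
    using S unfolding S2_def f2_subspace_def by auto
  ultimately show ?thesis
    unfolding subspace_splits_def by blast
qed

lemma subspace_splits_singleton_if_avoids:
  assumes S: "f2_subspace n S" and avoid: "\<forall>s\<in>S. t \<notin> s"
  shows "subspace_splits n S {t}"
proof -
  have "f2_subspace n {{}}" "\<forall>a\<in>S. a \<subseteq> {0..<n} - {t}" "S = {f2_add a1 a2 |a1 a2. a1 \<in> {{}} \<and> a2 \<in> S}"
    using S avoid unfolding f2_subspace_def by auto
  then show ?thesis
    using S unfolding subspace_splits_def by blast
qed

text \<open>In a non-splitting code of distance greater than 2 every qubit is touched by an \<open>X\<close>-type and
  by a \<open>Z\<close>-type stabilizer: otherwise the weight-one operator on that qubit is a stabilizer of the
  other type (it cannot be a non-trivial logical), and the code splits off that qubit.\<close>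

lemma non_splitting_qubit_in_stabilizers:
  assumes css: "is_CSS n A B" and nonsplit: "css_non_splitting n A B"
    and dist: "css_distance_gt n A B 2" and n: "2 \<le> n" and t: "t < n"
  shows "(\<exists>a\<in>A. t \<in> a) \<and> (\<exists>b\<in>B. t \<in> b)"
proof -
  have SA: "f2_subspace n A" and SB: "f2_subspace n B"
    using css by (auto simp: is_CSS_def)
  have "(if t = 0 then 1 else 0) \<notin> {t}" "(if t = 0 then 1 else 0) \<in> {0..<n}"
    using n by simp_all
  then have "{t} \<noteq> {0..<n}"
    by blast
  then have "{t} \<noteq> {} \<and> {t} \<subset> {0..<n}"
    using t by (simp add: psubset_eq)
  then have no_split: "\<not> css_splits n A B {t}"
    using nonsplit by (simp add: css_non_splitting_def)
  have covered: "\<exists>s\<in>S. t \<in> s"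
    if S: "f2_subspace n S" and T: "f2_subspace n T" and heavy: "\<forall>x \<in> f2_perp n S - T. 2 < card x"
      and no_split: "\<not> (subspace_splits n S {t} \<and> subspace_splits n T {t})" for S T
  proof (rule ccontr)
    assume "\<not> (\<exists>s\<in>S. t \<in> s)"
    then have avoid: "\<forall>s\<in>S. t \<notin> s"
      by blast
    then have "{t} \<in> f2_perp n S"
      using t by (auto simp: f2_perp_def f2_dot_zero_def)
    have "{t} \<in> T"
    proof (rule ccontr)
      assume "{t} \<notin> T"
      then have "2 < card {t}"
        using heavy \<open>{t} \<in> f2_perp n S\<close> by blast
      then show False
        by simp
    qed
    then show False
      using no_split subspace_splits_singleton_if_avoids[OF S avoid] subspace_splits_singleton_if_mem[OF T]
      by blast
  qed
  show ?thesis
    using covered[OF SA SB] covered[OF SB SA] no_split dist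
    unfolding css_splits_def css_distance_gt_def by blast
qed

lemma non_splitting_stabilizer_with_factor:
  assumes css: "is_CSS n A B" and nonsplit: "css_non_splitting n A B"
    and dist: "css_distance_gt n A B 2" and n: "2 \<le> n" and t: "t < n"
  obtains a b where "a \<in> A" "b \<in> B" "pauli_string a b t = pauli_xz \<alpha> \<beta>"
proof -
  obtain a0 b0 where "a0 \<in> A" "t \<in> a0" "b0 \<in> B" "t \<in> b0"
    using non_splitting_qubit_in_stabilizers[OF assms] by blast
  moreover have "{} \<in> A" "{} \<in> B"
    using css by (auto simp: is_CSS_def f2_subspace_def)
  ultimately show ?thesis
    using that[of "if \<alpha> then a0 else {}" "if \<beta> then b0 else {}"] by (auto simp: pauli_string_def)
qed

lemma logical_identity_mult:
  assumes "logical_identity n A B U" "logical_identity n A B V"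
    "U \<in> carrier_mat (2 ^ n) (2 ^ n)" "V \<in> carrier_mat (2 ^ n) (2 ^ n)"
  shows "logical_identity n A B (U * V)"
  using assms by (simp add: logical_identity_def codespace_def)

lemma logical_identity_adj:
  assumes "logical_identity n A B U" "unitary_mat (2 ^ n) U"
  shows "logical_identity n A B (adj U)"
  unfolding logical_identity_def
proof
  fix \<psi>
  assume \<psi>: "\<psi> \<in> codespace n A B"
  then have c: "\<psi> \<in> carrier_vec (2 ^ n)"
    by (simp add: codespace_def)
  have C: "U \<in> carrier_mat (2 ^ n) (2 ^ n)" "adj U * U = 1\<^sub>m (2 ^ n)"
    using assms(2) by (simp_all add: unitary_mat_def)
  have "adj U *\<^sub>v \<psi> = adj U *\<^sub>v (U *\<^sub>v \<psi>)"
    using assms(1) \<psi> by (simp add: logical_identity_def)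
  also have "\<dots> = (adj U * U) *\<^sub>v \<psi>"
    using assoc_mult_mat_vec[OF adj_carrier_mat[OF C(1)] C(1) c] by (rule sym)
  also have "\<dots> = \<psi>"
    using C(2) c by simp
  finally show "adj U *\<^sub>v \<psi> = \<psi>" .
qed

lemma logical_identity_group_commutator:
  assumes "logical_identity n A B U" "logical_identity n A B S"
    "unitary_mat (2 ^ n) U" "unitary_mat (2 ^ n) S"
  shows "logical_identity n A B (U * S * adj U * adj S)"
proof -
  have C: "U \<in> carrier_mat (2 ^ n) (2 ^ n)" "adj U \<in> carrier_mat (2 ^ n) (2 ^ n)"
    "S \<in> carrier_mat (2 ^ n) (2 ^ n)" "adj S \<in> carrier_mat (2 ^ n) (2 ^ n)"
    using assms(3,4) by (auto simp: unitary_mat_def)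
  have "logical_identity n A B (U * S)"
    by (rule logical_identity_mult[OF assms(1,2) C(1) C(3)])
  then have "logical_identity n A B (U * S * adj U)"
    by (rule logical_identity_mult[OF _ logical_identity_adj[OF assms(1,3)]]) (use C in auto)
  then show ?thesis
    by (rule logical_identity_mult[OF _ logical_identity_adj[OF assms(2,4)]]) (use C in auto)
qed

lemma logical_identity_stabilizer:
  assumes "a \<in> A" "b \<in> B"
  shows "logical_identity n A B (tensor n (pauli_string a b))"
  using assms logical_identity_mult[of n A B "Xpow n a" "Zpow n b"]
  by (simp add: logical_identity_def codespace_def Xpow_def Zpow_def flip: Xpow_mult_Zpow)


section \<open>Descending the hierarchy\<close>

text \<open>Some factor \<open>C t\<close> of \<open>U\<close> is too high in the hierarchy, witnessed by a Pauli \<open>P\<close>. Taking a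
  stabilizer \<open>S\<close> whose \<open>t\<close>-th factor is \<open>P\<close>, the group commutator \<open>U S U\<^sup>\<dagger> S\<^sup>\<dagger>\<close> is again a
  1-local logical identity, and it lies exactly one level lower.\<close>

lemma multi_qubit_descent:
  assumes css: "is_CSS n A B" and nonsplit: "css_non_splitting n A B" and dist: "css_distance_gt n A B 2"
    and n: "2 \<le> n" and C: "\<And>s. s < n \<Longrightarrow> unitary_mat 2 (C s)"
    and U3: "tensor n C \<in> clifford_hierarchy n (Suc (Suc (Suc k)))"
    and li: "logical_identity n A B (tensor n C)"
    and t: "t < n" and Ct: "C t \<notin> clifford_hierarchy 1 (Suc (Suc k))"
  shows "\<exists>V. one_local n V \<and> V \<in> clifford_hierarchy n (Suc (Suc k)) \<and> V \<notin> clifford_hierarchy n (Suc k)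
    \<and> logical_identity n A B V"
proof -
  obtain \<alpha> \<beta> where not_lower: "C t * pauli_xz \<alpha> \<beta> * adj (C t) \<notin> clifford_hierarchy 1 (Suc k)"
    using Ct C[OF t] clifford_hierarchy_1_Suc_Suc_iff by blast
  obtain a b where ab: "a \<in> A" "b \<in> B" "pauli_string a b t = pauli_xz \<alpha> \<beta>"
    using non_splitting_stabilizer_with_factor[OF css nonsplit dist n t] .
  define S where "S = tensor n (pauli_string a b)"
  define E where "E s = C s * pauli_string a b s * adj (C s) * adj (pauli_string a b s)" for s
  have SP: "S \<in> pauli_group n"
    unfolding S_def pauli_group_iff by (metis one_smult_mat power_0)
  have P: "pauli_string a b s \<in> pauli_group 1" for s
    by (simp add: pauli_string_def pauli_xz_in_pauli_group)
  have VE: "tensor n C * S * adj (tensor n C) * adj S = tensor n E"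
    unfolding S_def E_def using C by (intro tensor_group_commutator) (simp_all add: unitary_mat_def)
  have "one_local n (tensor n E)"
    unfolding one_local_def using C pauli_group_unitary[OF P]
    by (auto simp: E_def intro!: exI[of _ E] unitary_mat_mult unitary_mat_adj)
  moreover have "tensor n E \<in> clifford_hierarchy n (Suc (Suc k))"
    using clifford_hierarchy_group_commutator[OF _ SP] U3 VE by (metis clifford_hierarchy.simps(3))
  moreover have "tensor n E \<notin> clifford_hierarchy n (Suc k)"
  proof
    assume "tensor n E \<in> clifford_hierarchy n (Suc k)"
    then have "C t * pauli_string a b t * adj (C t) \<in> clifford_hierarchy 1 (Suc k)"
      unfolding E_def using conj_factor_in_clifford_hierarchy_if_commutator[of n C "pauli_string a b" k t] C P t
      by blast
    then show False
      using not_lower ab(3) by simp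
  qed
  moreover have "logical_identity n A B (tensor n E)"
    using logical_identity_group_commutator[OF li logical_identity_stabilizer[OF ab(1,2)]]
      tensor_unitary_mat[OF C] pauli_group_unitary[OF SP] VE
    unfolding S_def by simp
  ultimately show ?thesis
    by blast
qed

lemma one_local_1_iff: "one_local 1 U \<longleftrightarrow> unitary_mat 2 U"
proof
  assume "one_local 1 U"
  then obtain C where "unitary_mat 2 (C 0)" "U = tensor 1 C"
    unfolding one_local_def by auto
  then show "unitary_mat 2 U"
    by (simp add: tensor_1 unitary_mat_carrier)
next
  assume "unitary_mat 2 U"
  then show "one_local 1 U"
    unfolding one_local_def by (intro exI[of _ "\<lambda>_. U"]) (simp add: tensor_1 unitary_mat_carrier)
qed

lemma Xpow_1: "Xpow 1 a = (if 0 \<in> a then pauli_X else 1\<^sub>m 2)"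
  unfolding Xpow_def by (subst tensor_1) auto

lemma Zpow_1: "Zpow 1 b = (if 0 \<in> b then pauli_Z else 1\<^sub>m 2)"
  unfolding Zpow_def by (subst tensor_1) auto

lemma f2_subspace_1_cases:
  assumes "f2_subspace 1 S"
  shows "S = {{}} \<or> S = {{}, {0}}"
proof -
  have "x = {} \<or> x = {0}" if "x \<in> S" for x
  proof -
    have "x \<subseteq> {0}"
      using assms that by (auto simp: f2_subspace_def One_nat_def)
    then show ?thesis
      by (rule subset_singletonD)
  qed
  moreover have "{} \<in> S"
    using assms by (simp add: f2_subspace_def)
  ultimately show ?thesis
    by blast
qed

lemma pauli_xz_eq_X_Z_product:
  "\<exists>c x y. pauli_xz \<alpha> \<beta> = \<i> ^ c \<cdot>\<^sub>m ((if x then pauli_X else 1\<^sub>m 2) * (if y then pauli_Z else 1\<^sub>m 2))"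
  by (rule exI[of _ 0], rule exI[of _ \<alpha>], rule exI[of _ \<beta>]) (simp add: pauli_xz_def)

lemma pauli_xz_eq_Z_X_product:
  "\<exists>c x y. pauli_xz \<alpha> \<beta> = \<i> ^ c \<cdot>\<^sub>m ((if x then pauli_Z else 1\<^sub>m 2) * (if y then pauli_X else 1\<^sub>m 2))"
proof (cases "\<alpha> \<and> \<beta>")
  case True
  have "pauli_Z * pauli_X = (-1) \<cdot>\<^sub>m (pauli_X * pauli_Z)"
    using pauli_xz_mult[of False True True False]
    by (simp add: pauli_xz_True_False pauli_xz_False_True pauli_xz_def[of True True])
  then have "pauli_xz \<alpha> \<beta> = \<i> ^ 2 \<cdot>\<^sub>m ((if True then pauli_Z else 1\<^sub>m 2) * (if True then pauli_X else 1\<^sub>m 2))"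
    using True by (simp add: pauli_xz_def smult_smult_mat)
  then show ?thesis
    by blast
next
  case False
  show ?thesis
    by (rule exI[of _ 0], rule exI[of _ \<beta>], rule exI[of _ \<alpha>]) (use False in
        \<open>auto simp: pauli_xz_def right_mult_one_mat[OF pauli_X_carrier] left_mult_one_mat[OF pauli_Z_carrier]
          right_mult_one_mat[OF pauli_Z_carrier] left_mult_one_mat[OF pauli_X_carrier]\<close>)
qed

lemma logical_identity_trivial_code:
  assumes "logical_identity n {{}} {{}} W" "W \<in> carrier_mat (2 ^ n) (2 ^ n)"
  shows "W = 1\<^sub>m (2 ^ n)"
proof (rule eq_matI)
  fix i j
  assume ij: "i < dim_row (1\<^sub>m (2 ^ n) :: complex mat)" "j < dim_col (1\<^sub>m (2 ^ n) :: complex mat)"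
  have "Xpow n {} = 1\<^sub>m (2 ^ n)" "Zpow n {} = 1\<^sub>m (2 ^ n)"
    unfolding Xpow_def Zpow_def by (simp_all add: tensor_one_mat)
  then have "W *\<^sub>v unit_vec (2 ^ n) j = unit_vec (2 ^ n) j"
    using assms(1) by (simp add: logical_identity_def codespace_def)
  moreover have "(W *\<^sub>v unit_vec (2 ^ n) j) $ i = W $$ (i, j)"
    using assms(2) ij by (simp add: scalar_prod_right_unit)
  ultimately show "W $$ (i, j) = 1\<^sub>m (2 ^ n) $$ (i, j)"
    using ij by simp
qed (use assms(2) in auto)

text \<open>On one qubit a non-trivial CSS code is spanned by \<open>|+\<rangle>\<close> or by \<open>|0\<rangle>\<close>, which the logical
  identity \<open>W\<close> must fix; \<open>W\<^sup>\<dagger>\<^sup>2\<close> is then a logical identity one level lower.\<close>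

lemma single_qubit_code_descent:
  assumes css: "is_CSS 1 A B" and W3: "W \<in> clifford_hierarchy 1 (Suc (Suc (Suc k)))"
    and W2: "W \<notin> clifford_hierarchy 1 (Suc (Suc k))" and li: "logical_identity 1 A B W"
  shows "\<exists>V. one_local 1 V \<and> V \<in> clifford_hierarchy 1 (Suc (Suc k)) \<and> V \<notin> clifford_hierarchy 1 (Suc k)
    \<and> logical_identity 1 A B V"
proof -
  have U: "unitary_mat 2 W"
    using W3 by simp
  then have CW: "W \<in> carrier_mat 2 2" "adj W \<in> carrier_mat 2 2"
    by (auto simp: unitary_mat_def)
  have V: "one_local 1 (adj W * adj W)" "logical_identity 1 A B (adj W * adj W)"
    using U CW logical_identity_adj[OF li] unitary_mat_mult unitary_mat_adj
    by (simp_all add: one_local_1_iff logical_identity_mult)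
  have "\<not> f2_dot_zero {0} {0}"
    by (simp add: f2_dot_zero_def)
  then have "{0} \<notin> A \<or> {0} \<notin> B"
    using css unfolding is_CSS_def by blast
  moreover have "A = {{}} \<or> A = {{}, {0}}" "B = {{}} \<or> B = {{}, {0}}"
    using css f2_subspace_1_cases by (auto simp: is_CSS_def)
  ultimately consider "A = {{}}" "B = {{}}" | "A = {{}, {0}}" "B = {{}}" | "A = {{}}" "B = {{}, {0}}"
    by blast
  then have "adj W * adj W \<in> clifford_hierarchy 1 (Suc (Suc k)) \<and> adj W * adj W \<notin> clifford_hierarchy 1 (Suc k)"
  proof cases
    case 1
    then have "W \<in> pauli_group 1"
      using logical_identity_trivial_code[of 1 W] li CW pauli_xz_in_pauli_group[of False False] by simp
    then show ?thesis
      using W2 clifford_hierarchy_mono[of 1 "Suc (Suc k)" 1] by (auto simp: One_nat_def)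
  next
    case 2
    have "pauli_X *\<^sub>v vec 2 (\<lambda>_. 1) = vec 2 (\<lambda>_. 1)"
      by (rule eq_vecI) (auto simp: pauli_X_def scalar_prod_def numeral_2_eq_2)
    then have "W *\<^sub>v vec 2 (\<lambda>_. 1) = vec 2 (\<lambda>_. 1)"
      using li 2 by (simp add: logical_identity_def codespace_def Xpow_1 Zpow_1)
    then obtain w where w: "cmod w = 1" "W * pauli_X * adj W = pauli_X"
      "W * pauli_Z * adj W = w \<cdot>\<^sub>m (pauli_Z * (adj W * adj W))"
      using unitary_fixing_plus_conj_paulis[OF U] by blast
    show ?thesis
      using single_qubit_descent[OF W3 W2 pauli_X_in_pauli_group pauli_Z_in_pauli_group pauli_Z_square w
          pauli_xz_eq_X_Z_product] .
  next
    case 3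
    have "pauli_Z *\<^sub>v unit_vec 2 0 = unit_vec 2 0"
      by (rule eq_vecI) (auto simp: pauli_Z_def scalar_prod_def numeral_2_eq_2)
    then have "W *\<^sub>v unit_vec 2 0 = unit_vec 2 0"
      using li 3 by (simp add: logical_identity_def codespace_def Xpow_1 Zpow_1)
    then obtain w where w: "cmod w = 1" "W * pauli_Z * adj W = pauli_Z"
      "W * pauli_X * adj W = w \<cdot>\<^sub>m (pauli_X * (adj W * adj W))"
      using unitary_fixing_zero_conj_paulis[OF U] by blast
    show ?thesis
      using single_qubit_descent[OF W3 W2 pauli_Z_in_pauli_group pauli_X_in_pauli_group pauli_X_square w
          pauli_xz_eq_Z_X_product] .
  qed
  then show ?thesis
    using V by blast
qed

lemma one_local_logical_identity_descent:
  assumes css: "is_CSS n A B" and nonsplit: "css_non_splitting n A B" and dist: "css_distance_gt n A B 2"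
    and U: "one_local n U" "U \<in> clifford_hierarchy n (Suc (Suc (Suc k)))" "U \<notin> clifford_hierarchy n (Suc (Suc k))"
    and li: "logical_identity n A B U"
  shows "\<exists>V. one_local n V \<and> V \<in> clifford_hierarchy n (Suc (Suc k)) \<and> V \<notin> clifford_hierarchy n (Suc k)
    \<and> logical_identity n A B V"
proof -
  obtain C where C: "\<And>t. t < n \<Longrightarrow> unitary_mat 2 (C t)" and U_eq: "U = tensor n C"
    using U(1) unfolding one_local_def by blast
  obtain t where t: "t < n" "C t \<notin> clifford_hierarchy 1 (Suc (Suc k))"
    using tensor_in_clifford_hierarchy[of n C "Suc k"] U(3) U_eq by blast
  show ?thesis
  proof (cases "2 \<le> n")
    case True
    then show ?thesis
      using multi_qubit_descent[OF css nonsplit dist True C U(2)[unfolded U_eq] li[unfolded U_eq] t] by simp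
  next
    case False
    then have "n = 1"
      using t by linarith
    then show ?thesis
      using single_qubit_code_descent[of A B U k] css U li unfolding \<open>n = 1\<close> by blast
  qed
qed

theorem theorem1:
  fixes n k :: nat and A B :: "nat set set"
  assumes css: "is_CSS n A B"
    and nonsplit: "css_non_splitting n A B"
    and dist: "css_distance_gt n A B 2"
    and k: "k \<ge> 2"
    and hyp: "\<forall>U. one_local n U \<and> U \<in> clifford_hierarchy n k - clifford_hierarchy n (k - 1)
                 \<longrightarrow> \<not> logical_identity n A B U"
  shows "\<forall>m \<ge> k. \<forall>U. one_local n U \<and> U \<in> clifford_hierarchy n m - clifford_hierarchy n (k - 1)
                 \<longrightarrow> \<not> logical_identity n A B U"
proof (rule allI, rule impI)
  fix m
  assume "k \<le> m"
  then show "\<forall>U. one_local n U \<and> U \<in> clifford_hierarchy n m - clifford_hierarchy n (k - 1)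
                 \<longrightarrow> \<not> logical_identity n A B U"
  proof (induction m rule: nat_induct_at_least)
    case base
    then show ?case
      using hyp by blast
  next
    case (Suc m)
    obtain j where j: "m = Suc (Suc j)"
      using k Suc.hyps by (metis add_2_eq_Suc le_add_diff_inverse le_trans)
    have "clifford_hierarchy n (k - 1) \<subseteq> clifford_hierarchy n (Suc j)"
      using k j Suc.hyps by (intro clifford_hierarchy_mono) auto
    then show ?case
      using Suc.IH one_local_logical_identity_descent[OF css nonsplit dist] j by blast
  qed
qed

end
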